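(* Let $p$ be a prime. For $F=\begin{pmatrix}\alpha&\beta\\ \gamma&\delta\end{pmatrix}\in SL(2,\mathbb{Z}_p)$ and $u=(u_1,u_2)\in\mathbb{Z}_p^2$ let $C_{(F|u)}=D_uU_F$ be the Clifford unitary on $\mathbb{C}^p$ described in the context, and let $$|J^F_u\rangle=(I\otimes C_{(F|u)})\frac{1}{\sqrt p}\sum_{j=0}^{p-1}|jj\rangle\in\mathbb{C}^p\otimes\mathbb{C}^p .$$ For each $F$, $\mathcal{B}_F=\{|J^F_u\rangle: u\in\mathbb{Z}_p^2\}$ is an orthonormal basis of $\mathbb{C}^p\otimes\mathbb{C}^p$. Then: (a) If $F_1,F_2\in SL(2,\mathbb{Z}_p)$ satisfy $\mathrm{Tr}(F_1^{-1}F_2)\neq 2\pmod p$, then the bases $\mathcal{B}_{F_1}$ and $\mathcal{B}_{F_2}$ are mutually unbiased, i.e. $|\langle J^{F_1}_u|J^{F_2}_v\rangle|=1/p$ for all $u,v\in\mathbb{Z}_p^2$. (b) If $\mathcal{F}=\{F_i\}\subset SL(2,\mathbb{Z}_p)$ has $|\mathcal{F}|=p^2-1$ and pairwise satisfies $\mathrm{Tr}(F_i^{-1}F_j)\neq 2\pmod p$ for $i\neq j$, then (i) $\{\mathcal{B}_{F}:F\in\mathcal{F}\}$ is a complete bipartite entangled stabilizer MUB, i.e. a set of $p^2-1$ pairwise mutually unbiased orthonormal bases of $\mathbb{C}^p\otimes\mathbb{C}^p$ consisting of maximally entangled stabilizer states, and (ii) $\mathcal{F}$ is a maximum clique of the Cayley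 graph $\Gamma(G,T)$ with $G=SL(2,\mathbb{Z}_p)$ and $T=\{F\in SL(2,\mathbb{Z}_p):\mathrm{Tr}(F)\neq 2\pmod p\}$.
   Context: Let $\omega=e^{2\pi i/p}$, $\tau=e^{(p+1)\pi i/p}$. On $\mathbb{C}^p$ with basis $\{|j\rangle\}_{j\in\mathbb{Z}_p}$ define $X|j\rangle=|j+1\rangle$, $Z|j\rangle=\omega^j|j\rangle$, and displacement operators $D_u=\tau^{u_1u_2}X^{u_1}Z^{u_2}$. For $F=\begin{pmatrix}\alpha&\beta\\ \gamma&\delta\end{pmatrix}\in SL(2,\mathbb{Z}_p)$, define $U_F=\frac{1}{\sqrt p}\sum_{j,k=0}^{p-1}\tau^{\beta^{-1}(\alpha k^2-2jk+\delta j^2)}|j\rangle\langle k|$ if $\beta\neq0$, and $U_F=\sum_{k=0}^{p-1}\tau^{\alpha\gamma k^2}|\alpha k\rangle\langle k|$ if $\beta=0$ (inverses taken mod $p$); this is Appleby's unitary implementing the symplectic action, $U_FD_vU_F^\dagger=D_{Fv}$, and $C_{(F|u)}=D_uU_F$. Two orthonormal bases $\{|a\rangle\},\{|b\rangle\}$ of a $d$-dimensional space are mutually unbiased if $|\langle a|b\rangle|=1/\sqrt d$ for all $a,b$. The Cayley graph $\Gamma(G,T)$ has vertex set $G$, with $g_1\sim g_2$ iff $g_1^{-1}g_2\in T$. A clique is a set of pairwise adjacent vertices; a maximum clique is one of largest possible size. *)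

theory Defs
  imports "HOL-Analysis.Analysis" "HOL-Algebra.Group"
begin

text \<open>Elements of Z_p are represented by their canonical representatives in {..<p} (type nat).
  Operators on C^p are matrices nat => nat => complex, only entries with indices < p matter
  (entries outside are 0).  Exponents of tau are computed as integers from these representatives.\<close>

definition omega :: "nat \<Rightarrow> complex" where
  "omega p = cis (2 * pi / real p)"

definition tau :: "nat \<Rightarrow> complex" where
  "tau p = cis ((real p + 1) * pi / real p)"

definition zinv :: "nat \<Rightarrow> nat \<Rightarrow> nat" where
  "zinv p b = (SOME x. x < p \<and> (b * x) mod p = 1)"

type_synonym cmat = "nat \<Rightarrow> nat \<Rightarrow> complex"

definition idm :: "nat \<Rightarrow> cmat" where
  "idm p j k = (if j = k \<and> j < p then 1 else 0)"

definition mmult :: "nat \<Rightarrow> cmat \<Rightarrow> cmat \<Rightarrow> cmat" where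
  "mmult p A B j k = (\<Sum>m<p. A j m * B m k)"

primrec mpow :: "nat \<Rightarrow> cmat \<Rightarrow> nat \<Rightarrow> cmat" where
  "mpow p A 0 = idm p"
| "mpow p A (Suc n) = mmult p A (mpow p A n)"

definition Xop :: "nat \<Rightarrow> cmat" where
  "Xop p j k = (if j < p \<and> k < p \<and> j = (k + 1) mod p then 1 else 0)"

definition Zop :: "nat \<Rightarrow> cmat" where
  "Zop p j k = (if j = k \<and> j < p then omega p ^ j else 0)"

definition Dop :: "nat \<Rightarrow> nat \<times> nat \<Rightarrow> cmat" where
  "Dop p u j k = tau p ^ (fst u * snd u) * mmult p (mpow p (Xop p) (fst u)) (mpow p (Zop p) (snd u)) j k"

text \<open>A 2x2 matrix (alpha, beta, gamma, delta) over Z_p.\<close>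
type_synonym mat2 = "nat \<times> nat \<times> nat \<times> nat"

definition Uop :: "nat \<Rightarrow> mat2 \<Rightarrow> cmat" where
  "Uop p F j k = (case F of (\<alpha>, \<beta>, \<gamma>, \<delta>) \<Rightarrow>
     if j < p \<and> k < p then
       (if \<beta> \<noteq> 0 then
          (1 / complex_of_real (sqrt (real p))) *
            tau p powi (int (zinv p \<beta>) * (int \<alpha> * int k ^ 2 - 2 * int j * int k + int \<delta> * int j ^ 2))
        else (if j = (\<alpha> * k) mod p then tau p ^ (\<alpha> * \<gamma> * k ^ 2) else 0))
     else 0)"

definition Cliff :: "nat \<Rightarrow> mat2 \<Rightarrow> nat \<times> nat \<Rightarrow> cmat" where
  "Cliff p F u = mmult p (Dop p u) (Uop p F)"

text \<open>A vector of C^p (x) C^p is a function on index pairs (a,b), |a b> = |a> (x) |b>;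
  the space is the set of such functions supported on {..<p} x {..<p}.\<close>
type_synonym cvec2 = "nat \<times> nat \<Rightarrow> complex"

definition V2 :: "nat \<Rightarrow> cvec2 set" where
  "V2 p = {\<psi>. \<forall>a b. (p \<le> a \<or> p \<le> b) \<longrightarrow> \<psi> (a, b) = 0}"

definition inner2 :: "nat \<Rightarrow> cvec2 \<Rightarrow> cvec2 \<Rightarrow> complex" where
  "inner2 p \<psi> \<phi> = (\<Sum>a<p. \<Sum>b<p. cnj (\<psi> (a, b)) * \<phi> (a, b))"

definition kron_apply :: "nat \<Rightarrow> cmat \<Rightarrow> cmat \<Rightarrow> cvec2 \<Rightarrow> cvec2" where
  "kron_apply p A B \<psi> = (\<lambda>(a, b). \<Sum>a'<p. \<Sum>b'<p. A a a' * B b b' * \<psi> (a', b'))"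

definition bell :: "nat \<Rightarrow> cvec2" where
  "bell p = (\<lambda>(a, b). if a = b \<and> a < p then 1 / complex_of_real (sqrt (real p)) else 0)"

definition Jstate :: "nat \<Rightarrow> mat2 \<Rightarrow> nat \<times> nat \<Rightarrow> cvec2" where
  "Jstate p F u = kron_apply p (idm p) (Cliff p F u) (bell p)"

definition Zp2 :: "nat \<Rightarrow> (nat \<times> nat) set" where
  "Zp2 p = {..<p} \<times> {..<p}"

definition basisF :: "nat \<Rightarrow> mat2 \<Rightarrow> cvec2 set" where
  "basisF p F = Jstate p F ` Zp2 p"

definition is_onb :: "nat \<Rightarrow> cvec2 set \<Rightarrow> bool" where
  "is_onb p B \<longleftrightarrow> finite B \<and> B \<subseteq> V2 p \<and>
     (\<forall>x\<in>B. \<forall>y\<in>B. inner2 p x y = (if x = y then 1 else 0)) \<and>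
     (\<forall>\<psi>\<in>V2 p. \<psi> = (\<lambda>ab. \<Sum>b\<in>B. inner2 p b \<psi> * b ab))"

definition mub :: "nat \<Rightarrow> cvec2 set \<Rightarrow> cvec2 set \<Rightarrow> bool" where
  "mub p B1 B2 \<longleftrightarrow> is_onb p B1 \<and> is_onb p B2 \<and>
     (\<forall>a\<in>B1. \<forall>b\<in>B2. cmod (inner2 p a b) = 1 / sqrt (real (p ^ 2)))"

text \<open>Maximally entangled: unit vector whose reduced state on the first factor is I/p.\<close>
definition max_ent :: "nat \<Rightarrow> cvec2 \<Rightarrow> bool" where
  "max_ent p \<psi> \<longleftrightarrow> \<psi> \<in> V2 p \<and> inner2 p \<psi> \<psi> = 1 \<and>
     (\<forall>a<p. \<forall>a'<p. (\<Sum>b<p. \<psi> (a, b) * cnj (\<psi> (a', b))) = (if a = a' then 1 / of_nat p else 0))"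

text \<open>Two-qudit stabilizer states: nonzero common eigenvectors of all D_u (x) D_v with (u,v)
  ranging over a Lagrangian subspace of Z_p^4 (w.r.t. the standard symplectic form).\<close>
definition symp4 :: "nat \<Rightarrow> (nat \<times> nat) \<times> (nat \<times> nat) \<Rightarrow> (nat \<times> nat) \<times> (nat \<times> nat) \<Rightarrow> int" where
  "symp4 p w w' = (case w of ((u1, u2), (v1, v2)) \<Rightarrow> case w' of ((u1', u2'), (v1', v2')) \<Rightarrow>
     (int u1 * int u2' - int u2 * int u1' + int v1 * int v2' - int v2 * int v1') mod int p)"

definition add4 :: "nat \<Rightarrow> (nat \<times> nat) \<times> (nat \<times> nat) \<Rightarrow> (nat \<times> nat) \<times> (nat \<times> nat) \<Rightarrow> (nat \<times> nat) \<times> (nat \<times> nat)" where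
  "add4 p w w' = (case w of ((u1, u2), (v1, v2)) \<Rightarrow> case w' of ((u1', u2'), (v1', v2')) \<Rightarrow>
     (((u1 + u1') mod p, (u2 + u2') mod p), ((v1 + v1') mod p, (v2 + v2') mod p)))"

definition lagrangian :: "nat \<Rightarrow> ((nat \<times> nat) \<times> (nat \<times> nat)) set \<Rightarrow> bool" where
  "lagrangian p L \<longleftrightarrow> L \<subseteq> Zp2 p \<times> Zp2 p \<and> ((0, 0), (0, 0)) \<in> L \<and>
     (\<forall>w\<in>L. \<forall>w'\<in>L. add4 p w w' \<in> L) \<and> card L = p ^ 2 \<and>
     (\<forall>w\<in>L. \<forall>w'\<in>L. symp4 p w w' = 0)"

definition stab_state :: "nat \<Rightarrow> cvec2 \<Rightarrow> bool" where
  "stab_state p \<psi> \<longleftrightarrow> \<psi> \<in> V2 p \<and> \<psi> \<noteq> (\<lambda>_. 0) \<and>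
     (\<exists>L. lagrangian p L \<and>
        (\<forall>w\<in>L. \<exists>c::complex. kron_apply p (Dop p (fst w)) (Dop p (snd w)) \<psi> = (\<lambda>ab. c * \<psi> ab)))"

definition ent_stab_mub :: "nat \<Rightarrow> nat \<Rightarrow> cvec2 set set \<Rightarrow> bool" where
  "ent_stab_mub p n S \<longleftrightarrow> finite S \<and> card S = n \<and>
     (\<forall>B\<in>S. is_onb p B \<and> (\<forall>\<psi>\<in>B. max_ent p \<psi> \<and> stab_state p \<psi>)) \<and>
     (\<forall>B1\<in>S. \<forall>B2\<in>S. B1 \<noteq> B2 \<longrightarrow> mub p B1 B2)"

definition SL2 :: "nat \<Rightarrow> mat2 set" where
  "SL2 p = {(a, b, c, d). a < p \<and> b < p \<and> c < p \<and> d < p \<and>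
              (int a * int d - int b * int c) mod int p = 1}"

definition m2mul :: "nat \<Rightarrow> mat2 \<Rightarrow> mat2 \<Rightarrow> mat2" where
  "m2mul p F G = (case F of (a, b, c, d) \<Rightarrow> case G of (a', b', c', d') \<Rightarrow>
     ((a * a' + b * c') mod p, (a * b' + b * d') mod p, (c * a' + d * c') mod p, (c * b' + d * d') mod p))"

definition m2inv :: "nat \<Rightarrow> mat2 \<Rightarrow> mat2" where
  "m2inv p F = (case F of (a, b, c, d) \<Rightarrow> (d, (p - b) mod p, (p - c) mod p, a))"

definition m2tr :: "nat \<Rightarrow> mat2 \<Rightarrow> nat" where
  "m2tr p F = (case F of (a, b, c, d) \<Rightarrow> (a + d) mod p)"

definition SL2_group :: "nat \<Rightarrow> mat2 monoid" where
  "SL2_group p = \<lparr>carrier = SL2 p, mult = m2mul p, one = (1, 0, 0, 1)\<rparr>"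

definition cayley_adj :: "('a, 'b) monoid_scheme \<Rightarrow> 'a set \<Rightarrow> 'a \<Rightarrow> 'a \<Rightarrow> bool" where
  "cayley_adj G T g1 g2 \<longleftrightarrow> g1 \<in> carrier G \<and> g2 \<in> carrier G \<and> inv\<^bsub>G\<^esub> g1 \<otimes>\<^bsub>G\<^esub> g2 \<in> T"

definition is_clique :: "('a, 'b) monoid_scheme \<Rightarrow> 'a set \<Rightarrow> 'a set \<Rightarrow> bool" where
  "is_clique G T K \<longleftrightarrow> K \<subseteq> carrier G \<and> (\<forall>x\<in>K. \<forall>y\<in>K. x \<noteq> y \<longrightarrow> cayley_adj G T x y)"

definition is_max_clique :: "('a, 'b) monoid_scheme \<Rightarrow> 'a set \<Rightarrow> 'a set \<Rightarrow> bool" where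
  "is_max_clique G T K \<longleftrightarrow> is_clique G T K \<and> (\<forall>K'. is_clique G T K' \<longrightarrow> card K' \<le> card K)"

end

theory Submission
  imports Defs "HOL-Number_Theory.Cong"
begin

text \<open>
  The \<open>(a, b)\<close> entry of \<open>|J\<^sup>F\<^sub>u\<rangle>\<close> is \<open>C\<^sub>(\<^sub>F\<^sub>|\<^sub>u\<^sub>)(b, a) / \<surd>p\<close>, so
  \<open>\<langle>J\<^sup>F\<^sup>1\<^sub>u|J\<^sup>F\<^sup>2\<^sub>v\<rangle> = Tr(C\<^sub>1\<^sup>\<dagger> C\<^sub>2) / p\<close>. Orthonormality, completeness and maximal
  entanglement of \<open>\<B>\<^sub>F\<close> all reduce to unitarity of Appleby's \<open>U\<^sub>F\<close>. The entries of
  \<open>U\<^sub>F\<close> are quadratic phases \<open>\<tau>\<^bsup>\<beta>\<^sup>-\<^sup>1(\<alpha>k\<^sup>2 - 2jk + \<delta>j\<^sup>2)\<^esup>\<close> (or a monomial matrix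
  when \<open>\<beta> = 0\<close>), so the trace is a quadratic Gauss sum in one or two variables whose
  discriminant is a unit multiple of \<open>Tr(F\<^sub>1\<^sup>-\<^sup>1F\<^sub>2) - 2\<close>; when that is nonzero mod \<open>p\<close>
  the Gauss sum has the extremal modulus and the overlap is \<open>1/p\<close>.
  Each \<open>|J\<^sup>F\<^sub>u\<rangle>\<close> is an eigenvector of every \<open>D\<^sub>x \<otimes> D\<^sub>F\<^sub>(\<^sub>x\<^sub>1\<^sub>,\<^sub>-\<^sub>x\<^sub>2\<^sub>)\<close>, and these
  \<open>(x, F(x\<^sub>1, -x\<^sub>2))\<close> form a Lagrangian subspace, so it is a stabilizer state.
  Finally two elements of a clique of \<open>\<Gamma>(G, T)\<close> cannot share their first column (that forces
  \<open>Tr(F\<^sub>1\<^sup>-\<^sup>1F\<^sub>2) = 2\<close>) and \<open>(0, 0)\<close> is never a first column, so cliques have at most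
  \<open>p\<^sup>2 - 1\<close> elements.
\<close>

definition tau_angle :: "nat \<Rightarrow> real" where
  "tau_angle p = (real p + 1) * pi / real p"

definition phase :: "nat \<Rightarrow> int \<Rightarrow> complex" where
  "phase p n = cis (of_int n * tau_angle p)"

lemma tau_powi: "tau p powi n = phase p n"
  by (simp add: tau_def tau_angle_def phase_def cis_power_int)

lemma tau_power: "tau p ^ n = phase p (int n)"
  by (metis power_int_of_nat tau_powi)

lemma phase_add: "phase p (a + b) = phase p a * phase p b"
  by (simp add: phase_def cis_mult distrib_right)

lemma phase_0 [simp]: "phase p 0 = 1"
  by (simp add: phase_def)

lemma cnj_phase: "cnj (phase p n) = phase p (- n)"
  by (simp add: phase_def cis_cnj)

lemma norm_phase [simp]: "cmod (phase p n) = 1"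
  by (simp add: phase_def)

lemma phase_diff: "phase p (a - b) = phase p a * cnj (phase p b)"
  by (metis phase_add cnj_phase diff_conv_add_uminus)

lemma cnj_phase_mult: "cnj (phase p x) * phase p y = phase p (y - x)"
  by (simp add: phase_diff mult.commute)

lemma cnj_phase_mult_self [simp]: "cnj (phase p n) * phase p n = 1"
  by (simp add: cnj_phase_mult)

lemma phase_mult_cnj_self [simp]: "phase p n * cnj (phase p n) = 1"
  by (metis cnj_phase_mult_self mult.commute)

lemma phase_mult_power: "phase p (m * int k) = phase p m ^ k"
proof -
  have "phase p m ^ k = cis (real k * (of_int m * tau_angle p))"
    unfolding phase_def by (rule Complex.DeMoivre)
  thus ?thesis by (simp add: phase_def mult_ac)
qed

lemma cis_add_2pi_Ints: "x \<in> \<int> \<Longrightarrow> cis (y + 2 * pi * x) = cis y"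
  by (simp add: cis_mult[symmetric] cis_multiple_2pi)

lemma phase_period_2p:
  assumes "0 < p"
  shows "phase p (n + 2 * int p * k) = phase p n"
proof -
  have "of_int (n + 2 * int p * k) * tau_angle p = of_int n * tau_angle p + 2 * pi * (of_int k * (real p + 1))"
    using assms by (simp add: tau_angle_def field_simps)
  moreover have "of_int k * (real p + 1) \<in> \<int>" by (intro Ints_mult Ints_add) auto
  ultimately show ?thesis by (simp add: phase_def cis_add_2pi_Ints)
qed

lemma phase_period_p_square:
  assumes "0 < p"
  shows "phase p (n + int p * int p * k) = phase p n"
proof -
  obtain m where "p * (p + 1) = 2 * m" using dvd_def[of 2 "p * (p + 1)"] by auto
  hence m: "real p * (real p + 1) = 2 * real m"
    by (metis of_nat_1 of_nat_add of_nat_mult of_nat_numeral)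
  have "of_int (n + int p * int p * k) * tau_angle p = of_int n * tau_angle p + (of_int k * pi) * (real p * (real p + 1))"
    using assms by (simp add: tau_angle_def field_simps)
  also have "\<dots> = of_int n * tau_angle p + 2 * pi * (of_int k * real m)"
    by (simp add: m)
  finally show ?thesis by (simp add: phase_def cis_add_2pi_Ints)
qed

lemma omega_power:
  assumes "0 < p"
  shows "omega p ^ n = phase p (2 * int n)"
proof -
  have "omega p ^ n = cis (real n * (2 * pi / real p))"
    unfolding omega_def by (rule Complex.DeMoivre)
  moreover have "of_int (2 * int n) * tau_angle p = real n * (2 * pi / real p) + 2 * pi * of_nat n"
    using assms by (simp add: tau_angle_def field_simps)
  ultimately show ?thesis by (simp add: phase_def cis_add_2pi_Ints)
qed

lemma phase_double_eq_1_iff: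
  assumes p: "0 < p"
  shows "phase p (2 * c) = 1 \<longleftrightarrow> int p dvd c"
proof
  have "of_int (2 * c) * tau_angle p = 2 * pi * of_int c / real p + 2 * pi * of_int c"
    using p by (simp add: tau_angle_def field_simps)
  hence eq: "phase p (2 * c) = cis (2 * pi * of_int c / real p)"
    by (simp add: phase_def cis_add_2pi_Ints)
  assume "phase p (2 * c) = 1"
  hence "cos (2 * pi * of_int c / real p) = 1" unfolding eq by (metis cis.sel(1) one_complex.sel(1))
  then obtain n :: int where "2 * pi * of_int c / real p = of_int n * 2 * pi"
    using cos_one_2pi_int by blast
  hence "of_int c = real p * of_int n" using p by (simp add: field_simps)
  hence "c = int p * n" by (metis of_int_eq_iff of_int_mult of_int_of_nat_eq)
  thus "int p dvd c" by simp
next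
  assume "int p dvd c"
  then obtain k where "c = int p * k" by blast
  thus "phase p (2 * c) = 1" using phase_period_2p[OF p, of 0 k] by (simp add: mult.assoc)
qed

lemma sum_phase_linear:
  assumes p: "0 < p"
  shows "(\<Sum>k<p. phase p (2 * c * int k)) = (if int p dvd c then of_nat p else 0)"
proof -
  have s: "(\<Sum>k<p. phase p (2 * c * int k)) = (\<Sum>k<p. phase p (2 * c) ^ k)"
    by (simp add: phase_mult_power)
  show ?thesis
  proof (cases "int p dvd c")
    case True
    thus ?thesis using phase_double_eq_1_iff[OF p, of c] by (simp add: s)
  next
    case False
    have "phase p (2 * c) ^ p = phase p (2 * (int p * c))"
      by (simp add: phase_mult_power[symmetric] algebra_simps)
    also have "\<dots> = 1" using phase_double_eq_1_iff[OF p] by simp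
    finally show ?thesis using False phase_double_eq_1_iff[OF p] by (simp add: s sum_gp_strict)
  qed
qed

text \<open>As \<open>phase p\<close> is periodic both mod \<open>2p\<close> and mod \<open>p\<^sup>2\<close>, a quadratic exponent
  with even linear part depends on its argument only mod \<open>p\<close>.\<close>

lemma phase_quadratic_cong:
  assumes p: "0 < p" and "int p dvd (m' - m)"
  shows "phase p (c * m' ^ 2 + 2 * t * m' + r) = phase p (c * m ^ 2 + 2 * t * m + r)"
proof -
  obtain k where "m' - m = int p * k" using assms(2) by (elim dvdE)
  hence k: "m' = m + int p * k" by simp
  have "c * m' ^ 2 + 2 * t * m' + r
      = (c * m ^ 2 + 2 * t * m + r + 2 * int p * (c * m * k + t * k)) + int p * int p * (c * k ^ 2)"
    unfolding k by (simp add: power2_eq_square algebra_simps)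
  thus ?thesis by (simp only: phase_period_p_square[OF p] phase_period_2p[OF p])
qed

lemma phase_quadratic_cong':
  "0 < p \<Longrightarrow> int p dvd (m' - m) \<Longrightarrow> (\<And>x. f x = c * x ^ 2 + 2 * t * x + r) \<Longrightarrow>
    phase p (f m') = phase p (f m)"
  using phase_quadratic_cong by simp

lemma phase_linear_cong: "0 < p \<Longrightarrow> int p dvd (m' - m) \<Longrightarrow> phase p (2 * t * m' + r) = phase p (2 * t * m + r)"
  using phase_quadratic_cong[of p m' m 0 t r] by simp

lemma phase_double_cong: "0 < p \<Longrightarrow> int p dvd (x - y) \<Longrightarrow> phase p (2 * x) = phase p (2 * y)"
  using phase_quadratic_cong[of p x y 0 1 0] by simp

lemma phase_add_multiples:
  assumes "0 < p" "int p dvd P1" "int p dvd P2"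
  shows "phase p (Q + 2 * a * P1 + 2 * m * P2) = phase p Q"
proof -
  obtain t1 t2 where "P1 = int p * t1" "P2 = int p * t2" using assms by (auto elim!: dvdE)
  hence "Q + 2 * a * P1 + 2 * m * P2 = Q + 2 * int p * (a * t1 + m * t2)"
    by (simp add: algebra_simps)
  thus ?thesis by (simp only: phase_period_2p[OF assms(1)])
qed

lemma cnj_triple_mult:
  "cnj (x1 * y1 * z1) * (x2 * y2 * z2) = (cnj z1 * z2) * ((cnj x1 * x2) * (cnj y1 * (y2::complex)))"
  by (simp only: complex_cnj_mult mult_ac)

lemma cmod_square_eq_Re: "cmod S ^ 2 = Re (S * cnj S)"
  by (simp add: complex_mult_cnj cmod_def)

lemma of_real_sqrt_mult_self:
  "complex_of_real (sqrt (real p)) * complex_of_real (sqrt (real p)) = of_nat p"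
proof -
  have "complex_of_real (sqrt (real p)) * complex_of_real (sqrt (real p)) = complex_of_real (sqrt (real p) * sqrt (real p))"
    by (simp only: of_real_mult)
  thus ?thesis by simp
qed

lemma cnj_div_sqrt_mult_mult:
  "cnj (x / complex_of_real (sqrt (real p)) * y) * (x' / complex_of_real (sqrt (real p)) * y') = cnj x * x' / of_nat p * (cnj y * y')"
  by (simp add: of_real_sqrt_mult_self[symmetric])

lemma cnj_div_sqrt_mult:
  "cnj (x / complex_of_real (sqrt (real p))) * (y / complex_of_real (sqrt (real p))) = cnj x * y / of_nat p"
  by (simp add: of_real_sqrt_mult_self[symmetric])

lemma sum_lessThan_delta:
  "(\<Sum>m<(p::nat). if m = c then f m else 0) = (if c < p then f c else (0::'a::comm_monoid_add))"
  by (subst sum.delta) auto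

lemma sum_lessThan_delta2:
  "(\<Sum>a'<p. \<Sum>b'<(p::nat). if a = a' \<and> b = b' then f a' b' else 0) = (if a < p \<and> b < p then f a b else (0::'a::comm_monoid_add))"
proof -
  have "(\<Sum>a'<p. \<Sum>b'<p. if a = a' \<and> b = b' then f a' b' else 0) = (\<Sum>a'<p. if a' = a then (if b < p then f a b else 0) else 0)"
    by (intro sum.cong refl) (auto simp: sum.delta')
  thus ?thesis by (simp add: sum_lessThan_delta)
qed

lemma mod_eq_iff_dvd_diff: "x mod p = y mod p \<longleftrightarrow> int p dvd (int x - int y)" for x y p :: nat
  by (metis mod_eq_dvd_iff of_nat_eq_iff zmod_int)

lemma dvd_mod_diff: "int p dvd (int (n mod p) - int n)"
  by (metis dvd_minus_mod dvd_diff_commute zmod_int)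

lemma dvd_add_mod_diff: "int p dvd (int ((a + b) mod p) - (int a + int b))"
  using dvd_mod_diff[of p "a + b"] by simp

lemma dvd_sub_mod_diff:
  assumes "u \<le> p"
  shows "int p dvd (int ((b + p - u) mod p) - (int b - int u))"
proof -
  have "int (b + p - u) = int b + int p - int u" using assms by simp
  thus ?thesis using dvd_mod_diff[of p "b + p - u"] by algebra
qed

lemma eq_of_dvd_diff: "k < p \<Longrightarrow> k' < p \<Longrightarrow> int p dvd (int k - int k') \<Longrightarrow> k = k'"
  by (metis mod_eq_dvd_iff mod_less of_nat_eq_iff zmod_int)

lemma eq_mod_iff_dvd: "j < p \<Longrightarrow> j = x mod p \<longleftrightarrow> int p dvd (int j - int x)"
  by (metis mod_eq_dvd_iff mod_less of_nat_eq_iff zmod_int)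

lemma eq_add_mod_iff_eq_sub_mod:
  fixes p :: nat
  assumes "m < p" "j < p" "u < p"
  shows "j = (m + u) mod p \<longleftrightarrow> m = (j + p - u) mod p"
proof -
  have "int (j + p - u) = int j + int p - int u" using assms by simp
  thus ?thesis using assms by (simp add: eq_mod_iff_dvd) (rule iffI; algebra)
qed

lemma sub_mod_eq_iff_right:
  fixes p :: nat
  assumes "u < p" "v < p"
  shows "(b + p - u) mod p = (b + p - v) mod p \<longleftrightarrow> u = v"
proof
  assume eq: "(b + p - u) mod p = (b + p - v) mod p"
  have "int p dvd ((int ((b + p - v) mod p) - (int b - int v)) - (int ((b + p - u) mod p) - (int b - int u)))"
    using assms by (intro dvd_diff dvd_sub_mod_diff) auto
  hence "int p dvd (int v - int u)" using eq by simp
  thus "u = v" using eq_of_dvd_diff[of v p u] assms by simp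
qed simp

lemma sub_mod_eq_iff_left:
  fixes p :: nat
  assumes "b < p" "b' < p" "u \<le> p"
  shows "(b + p - u) mod p = (b' + p - u) mod p \<longleftrightarrow> b = b'"
proof
  assume eq: "(b + p - u) mod p = (b' + p - u) mod p"
  have "int p dvd ((int ((b + p - u) mod p) - (int b - int u)) - (int ((b' + p - u) mod p) - (int b' - int u)))"
    using assms by (intro dvd_diff dvd_sub_mod_diff) auto
  hence "int p dvd (int b' - int b)" using eq by simp
  thus "b = b'" using eq_of_dvd_diff[of b' p b] assms by simp
qed simp

lemma sum_lessThan_permute:
  fixes p :: nat
  shows "(\<And>k. k < p \<Longrightarrow> f k < p) \<Longrightarrow> inj_on f {..<p} \<Longrightarrow> (\<Sum>k<p. g (f k)) = (\<Sum>k<p. g k)"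
proof -
  assume "\<And>k. k < p \<Longrightarrow> f k < p" "inj_on f {..<p}"
  moreover from this have "f ` {..<p} = {..<p}" by (intro endo_inj_surj) auto
  ultimately show ?thesis using sum.reindex[of f "{..<p}" g] by simp
qed

lemma sum_lessThan_sub_mod:
  fixes p :: nat
  assumes "u < p"
  shows "(\<Sum>b<p. g ((b + p - u) mod p)) = (\<Sum>b<p. g b)"
  by (rule sum_lessThan_permute) (use assms sub_mod_eq_iff_left in \<open>auto intro!: inj_onI\<close>)

lemma sum_lessThan_reflect:
  fixes p :: nat
  assumes "b < p"
  shows "(\<Sum>u<p. g ((b + p - u) mod p)) = (\<Sum>u<p. g u)"
  by (rule sum_lessThan_permute) (use assms sub_mod_eq_iff_right in \<open>auto intro!: inj_onI\<close>)

lemma sum_lessThan_swap_pairs: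
  "(\<Sum>a<n. \<Sum>b<n. \<Sum>c<n. \<Sum>d<n. f a b c d) = (\<Sum>c<n. \<Sum>d<n. \<Sum>a<n. \<Sum>b<n. (f a b c d :: 'a::comm_monoid_add))"
proof -
  have "(\<Sum>a<n. \<Sum>b<n. \<Sum>c<n. \<Sum>d<n. f a b c d) = (\<Sum>a<n. \<Sum>c<n. \<Sum>b<n. \<Sum>d<n. f a b c d)"
    by (rule sum.cong[OF refl], rule sum.swap)
  also have "\<dots> = (\<Sum>a<n. \<Sum>c<n. \<Sum>d<n. \<Sum>b<n. f a b c d)"
    by (rule sum.cong[OF refl], rule sum.cong[OF refl], rule sum.swap)
  also have "\<dots> = (\<Sum>c<n. \<Sum>a<n. \<Sum>d<n. \<Sum>b<n. f a b c d)"
    by (rule sum.swap)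
  also have "\<dots> = (\<Sum>c<n. \<Sum>d<n. \<Sum>a<n. \<Sum>b<n. f a b c d)"
    by (rule sum.cong[OF refl], rule sum.swap)
  finally show ?thesis .
qed

lemma sum_Zp2: "(\<Sum>u\<in>Zp2 p. f u) = (\<Sum>u1<p. \<Sum>u2<p. f (u1, u2))"
  unfolding Zp2_def by (simp add: sum.cartesian_product)

lemma inner2_cnj: "inner2 p x y = cnj (inner2 p y x)"
  by (simp add: inner2_def mult.commute)

locale modulus =
  fixes p :: nat
  assumes p_pos: "0 < p"
begin

lemma sum_lessThan_shift: "(\<Sum>k<p. g ((k + s) mod p)) = (\<Sum>k<p. g k)"
proof (rule sum_lessThan_permute)
  show "inj_on (\<lambda>k. (k + s) mod p) {..<p}"
  proof (rule inj_onI)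
    fix k k' assume "k \<in> {..<p}" "k' \<in> {..<p}" "(k + s) mod p = (k' + s) mod p"
    thus "k = k'" using cong_add_rcancel_nat[of k s k' p] by (simp add: cong_def)
  qed
qed (simp add: p_pos)

lemma mpow_Xop: "mpow p (Xop p) n j k = (if j < p \<and> k < p \<and> j = (k + n) mod p then 1 else 0)"
proof (induction n arbitrary: j)
  case (Suc n)
  have "mpow p (Xop p) (Suc n) j k = (\<Sum>m<p. if m = (k + n) mod p then (if k < p then Xop p j m else 0) else 0)"
    unfolding mpow.simps mmult_def by (intro sum.cong refl) (auto simp: Suc.IH)
  also have "\<dots> = (if j < p \<and> k < p \<and> j = (k + Suc n) mod p then 1 else 0)"
    using p_pos by (auto simp: sum_lessThan_delta Xop_def mod_Suc_eq)
  finally show ?case .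
qed (auto simp: idm_def)

lemma mpow_Zop: "mpow p (Zop p) n j k = (if j = k \<and> j < p then omega p ^ (n * j) else 0)"
proof (induction n arbitrary: j)
  case (Suc n)
  have "mpow p (Zop p) (Suc n) j k
      = (\<Sum>m<p. if m = j then (if j = k \<and> j < p then omega p ^ j * omega p ^ (n * j) else 0) else 0)"
    unfolding mpow.simps mmult_def by (intro sum.cong refl) (auto simp: Suc.IH Zop_def)
  thus ?case by (simp add: sum_lessThan_delta power_add)
qed (auto simp: idm_def)

lemma Dop_entry:
  "Dop p (u1, u2) j k = (if j < p \<and> k < p \<and> j = (k + u1) mod p
    then phase p (int (u1 * u2)) * phase p (2 * int (u2 * k)) else 0)"
proof -
  have "mmult p (mpow p (Xop p) u1) (mpow p (Zop p) u2) j k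
     = (\<Sum>m<p. if m = k then (if j < p \<and> k < p \<and> j = (k + u1) mod p then omega p ^ (u2 * k) else 0) else 0)"
    unfolding mmult_def by (intro sum.cong refl) (auto simp: mpow_Xop mpow_Zop)
  thus ?thesis by (simp add: Dop_def tau_power sum_lessThan_delta omega_power[OF p_pos])
qed

lemma Uop_entry:
  "\<beta> \<noteq> 0 \<Longrightarrow> j < p \<Longrightarrow> k < p \<Longrightarrow> Uop p (\<alpha>, \<beta>, \<gamma>, \<delta>) j k =
    1 / complex_of_real (sqrt (real p)) *
    phase p (int (zinv p \<beta>) * (int \<alpha> * int k ^ 2 - 2 * int j * int k + int \<delta> * int j ^ 2))"
  by (simp add: Uop_def tau_powi)

lemma Uop_entry_beta_0:
  "j < p \<Longrightarrow> k < p \<Longrightarrow> Uop p (\<alpha>, 0, \<gamma>, \<delta>) j k =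
    (if j = (\<alpha> * k) mod p then phase p (int (\<alpha> * \<gamma> * k ^ 2)) else 0)"
  by (simp add: Uop_def tau_power)

lemma Cliff_entry:
  assumes "j < p" "k < p" "u1 < p"
  shows "Cliff p F (u1, u2) j k = phase p (int (u1 * u2)) *
    phase p (2 * int (u2 * ((j + p - u1) mod p))) * Uop p F ((j + p - u1) mod p) k"
proof -
  have "Cliff p F (u1, u2) j k = (\<Sum>m<p. if m = (j + p - u1) mod p
      then phase p (int (u1 * u2)) * phase p (2 * int (u2 * m)) * Uop p F m k else 0)"
    unfolding Cliff_def mmult_def
    by (intro sum.cong refl) (use assms in \<open>auto simp: Dop_entry eq_add_mod_iff_eq_sub_mod\<close>)
  thus ?thesis using p_pos by (simp add: sum_lessThan_delta)
qed

lemma Cliff_eq_0: "\<not> j < p \<Longrightarrow> Cliff p F u j k = 0"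
  by (cases u) (simp add: Cliff_def mmult_def Dop_entry)

lemma Jstate_entry:
  "Jstate p F u (a, b) = (if a < p then Cliff p F u b a / complex_of_real (sqrt (real p)) else 0)"
proof -
  have bell: "(\<Sum>b'<p. Cliff p F u b b' * bell p (a', b'))
      = (if a' < p then Cliff p F u b a' / complex_of_real (sqrt (real p)) else 0)" for a'
    by (simp add: bell_def if_distrib[of "\<lambda>x. _ * x"] sum_lessThan_delta[where c = a'] cong: if_cong)
  have "Jstate p F u (a, b) = (\<Sum>a'<p. idm p a a' * (\<Sum>b'<p. Cliff p F u b b' * bell p (a', b')))"
    by (simp add: Jstate_def kron_apply_def sum_distrib_left mult.assoc)
  also have "\<dots> = (\<Sum>a'<p. if a' = a then (if a < p then Cliff p F u b a / complex_of_real (sqrt (real p)) else 0) else 0)"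
    by (intro sum.cong refl) (auto simp: idm_def bell)
  finally show ?thesis by (simp add: sum_lessThan_delta)
qed

lemma Jstate_eq_0: "\<not> (a < p \<and> b < p) \<Longrightarrow> Jstate p F u (a, b) = 0"
  by (auto simp: Jstate_entry Cliff_eq_0)

lemma Jstate_in_V2: "Jstate p F u \<in> V2 p"
  unfolding V2_def using Jstate_eq_0 by auto

lemma cnj_Jstate_mult:
  assumes "a < p" "a' < p"
  shows "cnj (Jstate p F u (a', b')) * Jstate p G v (a, b) = cnj (Cliff p F u b' a') * Cliff p G v b a / of_nat p"
  using assms by (simp only: Jstate_entry if_True cnj_div_sqrt_mult)

lemma inner2_Jstate:
  "inner2 p (Jstate p F u) (Jstate p G v) = (\<Sum>b<p. \<Sum>a<p. cnj (Cliff p F u b a) * Cliff p G v b a) / of_nat p"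
  unfolding inner2_def by (subst sum.swap) (simp add: cnj_Jstate_mult sum_divide_distrib)

end

locale prime_modulus = modulus +
  assumes prime: "prime p"
begin

lemma p_ge_2: "2 \<le> p"
  using prime prime_ge_2_nat by blast

lemma prime_int: "prime (int p)"
  using prime by simp

lemma not_dvd_if_dvd_mult_minus_1: "int p dvd (x * y - 1) \<Longrightarrow> \<not> int p dvd x"
proof
  assume "int p dvd (x * y - 1)" "int p dvd x"
  hence "int p dvd 1" by algebra
  thus False using p_ge_2 by simp
qed

lemma dvd_mult_zinv_minus_1:
  assumes "0 < b" "b < p"
  shows "int p dvd (int b * int (zinv p b) - 1)"
proof -
  have "coprime b p"
    using assms prime by (metis coprime_commute nat_dvd_not_less prime_imp_coprime)
  then obtain x where "x < p" "[b * x = Suc 0] (mod p)"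
    using coprime_iff_invertible'_nat[of p b] p_pos by auto
  hence "\<exists>x. x < p \<and> (b * x) mod p = 1" using p_ge_2 by (auto simp: cong_def)
  hence "(b * zinv p b) mod p = 1"
    unfolding zinv_def by (rule someI2_ex) simp
  hence "(b * zinv p b) mod p = 1 mod p" using p_ge_2 by simp
  thus ?thesis by (simp only: mod_eq_iff_dvd_diff of_nat_mult of_nat_1)
qed

lemma SL2_entries:
  assumes "(\<alpha>, \<beta>, \<gamma>, \<delta>) \<in> SL2 p"
  shows "\<alpha> < p" "\<beta> < p" "\<gamma> < p" "\<delta> < p" "int p dvd (int \<alpha> * int \<delta> - int \<beta> * int \<gamma> - 1)"
  using assms p_ge_2 by (auto simp: SL2_def mod_eq_dvd_iff[of _ "int p" 1, simplified, symmetric])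

lemma mult_mod_inj:
  assumes "\<not> int p dvd int \<alpha>" "a < p" "a' < p" "(\<alpha> * a) mod p = (\<alpha> * a') mod p"
  shows "a = a'"
proof -
  have "int p dvd (int \<alpha> * (int a - int a'))"
    using assms(4) by (simp add: mod_eq_iff_dvd_diff right_diff_distrib)
  hence "int p dvd (int a - int a')" using assms(1) prime_dvd_mult_iff[OF prime_int] by blast
  thus ?thesis using eq_of_dvd_diff assms by blast
qed

section \<open>Quadratic Gauss sums\<close>

lemma cmod_gauss_sum:
  assumes nd: "\<not> int p dvd A"
  shows "cmod (\<Sum>a<p. phase p (A * int a ^ 2 + 2 * D * int a)) = sqrt (real p)"
proof -
  define \<Phi> where "\<Phi> = (\<lambda>a::int. A * a ^ 2 + 2 * D * a)"
  define S where "S = (\<Sum>a<p. phase p (\<Phi> (int a)))"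
  have shift: "(\<Sum>x<p. phase p (\<Phi> (int x) - \<Phi> (int y)))
      = (\<Sum>z<p. phase p (\<Phi> (int z)) * phase p (2 * (A * int z) * int y))" for y
  proof -
    have "(\<Sum>x<p. phase p (\<Phi> (int x) - \<Phi> (int y))) = (\<Sum>z<p. phase p (\<Phi> (int ((z + y) mod p)) - \<Phi> (int y)))"
      by (rule sum_lessThan_shift[symmetric])
    also have "\<dots> = (\<Sum>z<p. phase p (\<Phi> (int z + int y) - \<Phi> (int y)))"
    proof (intro sum.cong refl)
      fix z
      have "int p dvd (int ((z + y) mod p) - (int z + int y))" using dvd_mod_diff[of p "z + y"] by simp
      thus "phase p (\<Phi> (int ((z + y) mod p)) - \<Phi> (int y)) = phase p (\<Phi> (int z + int y) - \<Phi> (int y))"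
        by (rule phase_quadratic_cong'[OF p_pos, of _ _ _ A D "- \<Phi> (int y)"]) (simp add: \<Phi>_def algebra_simps)
    qed
    also have "\<dots> = (\<Sum>z<p. phase p (\<Phi> (int z)) * phase p (2 * (A * int z) * int y))"
      by (intro sum.cong refl) (simp add: \<Phi>_def phase_add[symmetric] power2_eq_square algebra_simps)
    finally show ?thesis .
  qed
  have "S * cnj S = (\<Sum>y<p. \<Sum>x<p. phase p (\<Phi> (int x) - \<Phi> (int y)))"
    unfolding S_def by (simp add: sum_distrib_left sum_distrib_right phase_diff)
  also have "\<dots> = (\<Sum>z<p. phase p (\<Phi> (int z)) * (\<Sum>y<p. phase p (2 * (A * int z) * int y)))"
    unfolding shift by (subst sum.swap) (simp add: sum_distrib_left)
  also have "\<dots> = (\<Sum>z<p. if z = 0 then of_nat p else 0)"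
  proof (intro sum.cong refl)
    fix z assume z: "z \<in> {..<p}"
    have "int p dvd A * int z \<longleftrightarrow> z = 0"
    proof
      assume "int p dvd A * int z"
      hence "int p dvd int z" using nd prime_dvd_mult_iff[OF prime_int] by blast
      thus "z = 0" using z eq_of_dvd_diff[of z p 0] by simp
    qed simp
    thus "phase p (\<Phi> (int z)) * (\<Sum>y<p. phase p (2 * (A * int z) * int y)) = (if z = 0 then of_nat p else 0)"
      by (simp add: sum_phase_linear[OF p_pos] \<Phi>_def)
  qed
  also have "\<dots> = of_nat p" using p_pos by (simp add: sum_lessThan_delta)
  finally have "cmod S ^ 2 = real p" by (simp add: cmod_square_eq_Re)
  hence "sqrt (real p) = cmod S" using real_sqrt_unique norm_ge_zero by blast
  thus ?thesis unfolding S_def \<Phi>_def by simp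
qed

lemma phase_binary_quadratic_cong:
  assumes "int p dvd (a' - a)" "int p dvd (b' - b)"
  shows "phase p (A * a' ^ 2 + C * b' ^ 2 + 2 * (B * a' * b' + D * a' + G * b') + K)
       = phase p (A * a ^ 2 + C * b ^ 2 + 2 * (B * a * b + D * a + G * b) + K)"
proof -
  have "phase p (A * a' ^ 2 + C * b' ^ 2 + 2 * (B * a' * b' + D * a' + G * b') + K)
      = phase p (A * a ^ 2 + C * b' ^ 2 + 2 * (B * a * b' + D * a + G * b') + K)"
    by (rule phase_quadratic_cong'[OF p_pos assms(1), of _ A "B * b' + D" "C * b' ^ 2 + 2 * G * b' + K"])
      (simp add: algebra_simps)
  also have "\<dots> = phase p (A * a ^ 2 + C * b ^ 2 + 2 * (B * a * b + D * a + G * b) + K)"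
    by (rule phase_quadratic_cong'[OF p_pos assms(2), of _ C "B * a + G" "A * a ^ 2 + 2 * D * a + K"])
      (simp add: algebra_simps)
  finally show ?thesis .
qed

lemma nondegenerate_kernel_trivial:
  assumes nd: "\<not> int p dvd (A * C - B ^ 2)" and z: "z1 < p" "z2 < p"
    and "int p dvd (A * int z1 + B * int z2)" "int p dvd (B * int z1 + C * int z2)"
  shows "z1 = 0 \<and> z2 = 0"
proof -
  have "int p dvd ((A * C - B ^ 2) * int z1)" using assms(4,5) by algebra
  moreover have "int p dvd ((A * C - B ^ 2) * int z2)" using assms(4,5) by algebra
  ultimately have "int p dvd int z1" "int p dvd int z2"
    using nd prime_int prime_dvd_mult_iff by blast+
  thus ?thesis using z eq_of_dvd_diff[of z1 p 0] eq_of_dvd_diff[of z2 p 0] p_pos by simp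
qed

lemma sum_lessThan_shift2:
  "(\<Sum>z1<p. \<Sum>z2<p. f ((z1 + y1) mod p) ((z2 + y2) mod p)) = (\<Sum>x1<p. \<Sum>x2<p. f x1 x2)"
proof -
  have "(\<Sum>z1<p. \<Sum>z2<p. f ((z1 + y1) mod p) ((z2 + y2) mod p)) = (\<Sum>z1<p. \<Sum>x2<p. f ((z1 + y1) mod p) x2)"
    by (rule sum.cong[OF refl]) (rule sum_lessThan_shift)
  also have "\<dots> = (\<Sum>x1<p. \<Sum>x2<p. f x1 x2)" by (rule sum_lessThan_shift)
  finally show ?thesis .
qed

lemma cmod_gauss_sum_2:
  assumes nd: "\<not> int p dvd (A * C - B ^ 2)"
  shows "cmod (\<Sum>a<p. \<Sum>b<p. phase p (A * int a ^ 2 + C * int b ^ 2 + 2 * (B * int a * int b + D * int a + G * int b) + K)) = real p"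
proof -
  define \<Phi> where "\<Phi> = (\<lambda>K a b::int. A * a ^ 2 + C * b ^ 2 + 2 * (B * a * b + D * a + G * b) + K)"
  define S where "S = (\<Sum>a<p. \<Sum>b<p. phase p (\<Phi> K (int a) (int b)))"
  define lin where "lin = (\<lambda>z1 z2 y1 y2. phase p (2 * (A * int z1 + B * int z2) * int y1) * phase p (2 * (B * int z1 + C * int z2) * int y2))"
  have shift: "(\<Sum>x1<p. \<Sum>x2<p. phase p (\<Phi> K (int x1) (int x2) - \<Phi> K (int y1) (int y2)))
      = (\<Sum>z1<p. \<Sum>z2<p. phase p (\<Phi> 0 (int z1) (int z2)) * lin z1 z2 y1 y2)" for y1 y2
  proof -
    have "(\<Sum>x1<p. \<Sum>x2<p. phase p (\<Phi> K (int x1) (int x2) - \<Phi> K (int y1) (int y2)))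
        = (\<Sum>x1<p. \<Sum>x2<p. phase p (\<Phi> (K - \<Phi> K (int y1) (int y2)) (int x1) (int x2)))"
      by (simp add: \<Phi>_def algebra_simps)
    also have "\<dots> = (\<Sum>z1<p. \<Sum>z2<p. phase p (\<Phi> (K - \<Phi> K (int y1) (int y2)) (int ((z1 + y1) mod p)) (int ((z2 + y2) mod p))))"
      by (rule sum_lessThan_shift2[symmetric])
    also have "\<dots> = (\<Sum>z1<p. \<Sum>z2<p. phase p (\<Phi> (K - \<Phi> K (int y1) (int y2)) (int z1 + int y1) (int z2 + int y2)))"
      unfolding \<Phi>_def by (intro sum.cong refl phase_binary_quadratic_cong) (simp_all add: dvd_add_mod_diff)
    also have "\<dots> = (\<Sum>z1<p. \<Sum>z2<p. phase p (\<Phi> 0 (int z1) (int z2)) * lin z1 z2 y1 y2)"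
      by (intro sum.cong refl) (simp add: \<Phi>_def lin_def phase_add[symmetric] power2_eq_square algebra_simps)
    finally show ?thesis .
  qed
  have "S * cnj S = (\<Sum>y1<p. \<Sum>y2<p. \<Sum>x1<p. \<Sum>x2<p. phase p (\<Phi> K (int x1) (int x2) - \<Phi> K (int y1) (int y2)))"
    unfolding S_def by (simp add: sum_distrib_left sum_distrib_right phase_diff)
  also have "\<dots> = (\<Sum>z1<p. \<Sum>z2<p. phase p (\<Phi> 0 (int z1) (int z2)) * (\<Sum>y1<p. \<Sum>y2<p. lin z1 z2 y1 y2))"
    unfolding shift by (subst sum_lessThan_swap_pairs) (simp only: sum_distrib_left)
  also have "\<dots> = (\<Sum>z1<p. \<Sum>z2<p. if z1 = 0 \<and> z2 = 0 then of_nat p * of_nat p else 0)"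
  proof (intro sum.cong refl)
    fix z1 z2 assume "z1 \<in> {..<p}" "z2 \<in> {..<p}"
    hence "z1 = 0 \<and> z2 = 0" if "int p dvd (A * int z1 + B * int z2)" "int p dvd (B * int z1 + C * int z2)"
      using nondegenerate_kernel_trivial[OF nd] that by simp
    thus "phase p (\<Phi> 0 (int z1) (int z2)) * (\<Sum>y1<p. \<Sum>y2<p. lin z1 z2 y1 y2) = (if z1 = 0 \<and> z2 = 0 then of_nat p * of_nat p else 0)"
      unfolding lin_def sum_product[symmetric] sum_phase_linear[OF p_pos] by (auto simp: \<Phi>_def)
  qed
  also have "\<dots> = (\<Sum>z1<p. if z1 = 0 then of_nat p * of_nat p else 0)"
    by (intro sum.cong refl) (use p_pos in \<open>auto simp: sum_lessThan_delta\<close>)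
  also have "\<dots> = of_nat p * of_nat p"
    using p_pos by (simp add: sum_lessThan_delta)
  finally have "S * cnj S = of_nat p * of_nat p" .
  hence "cmod S ^ 2 = real p ^ 2" by (simp only: cmod_square_eq_Re) (simp add: power2_eq_square)
  hence "cmod S = real p" using power2_eq_imp_eq norm_ge_zero of_nat_0_le_iff by blast
  thus ?thesis unfolding S_def \<Phi>_def by simp
qed

section \<open>Unitarity of Appleby's \<open>U\<^sub>F\<close>\<close>

lemma Uop_rows_orthonormal_beta_ne_0:
  assumes F: "(\<alpha>, \<beta>, \<gamma>, \<delta>) \<in> SL2 p" and \<beta>: "\<beta> \<noteq> 0" and mn: "m < p" "n < p"
  shows "(\<Sum>a<p. cnj (Uop p (\<alpha>, \<beta>, \<gamma>, \<delta>) m a) * Uop p (\<alpha>, \<beta>, \<gamma>, \<delta>) n a) = (if m = n then 1 else 0)"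
proof -
  define k where "k = int (zinv p \<beta>)"
  have "int p dvd (int \<beta> * k - 1)" using dvd_mult_zinv_minus_1 \<beta> SL2_entries[OF F] unfolding k_def by simp
  hence k: "\<not> int p dvd k" using not_dvd_if_dvd_mult_minus_1[of k "int \<beta>"] by (simp add: mult.commute)
  have "(\<Sum>a<p. cnj (Uop p (\<alpha>, \<beta>, \<gamma>, \<delta>) m a) * Uop p (\<alpha>, \<beta>, \<gamma>, \<delta>) n a)
      = (\<Sum>a<p. 1 / of_nat p * phase p (k * int \<delta> * (int n ^ 2 - int m ^ 2)) * phase p (2 * (k * (int m - int n)) * int a))"
  proof (intro sum.cong refl)
    fix a assume "a \<in> {..<p}"
    hence "cnj (Uop p (\<alpha>, \<beta>, \<gamma>, \<delta>) m a) * Uop p (\<alpha>, \<beta>, \<gamma>, \<delta>) n a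
      = cnj (1 / complex_of_real (sqrt (real p))) * (1 / complex_of_real (sqrt (real p))) *
        (cnj (phase p (k * (int \<alpha> * int a ^ 2 - 2 * int m * int a + int \<delta> * int m ^ 2))) *
         phase p (k * (int \<alpha> * int a ^ 2 - 2 * int n * int a + int \<delta> * int n ^ 2)))"
      using mn \<beta> by (simp add: Uop_entry k_def)
    also have "\<dots> = 1 / of_nat p * phase p (k * (int \<alpha> * int a ^ 2 - 2 * int n * int a + int \<delta> * int n ^ 2)
                              - k * (int \<alpha> * int a ^ 2 - 2 * int m * int a + int \<delta> * int m ^ 2))"
      by (simp only: cnj_div_sqrt_mult cnj_phase_mult) simp
    also have "\<dots> = 1 / of_nat p * phase p (k * int \<delta> * (int n ^ 2 - int m ^ 2)) * phase p (2 * (k * (int m - int n)) * int a)"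
      by (simp add: phase_add[symmetric] algebra_simps)
    finally show "cnj (Uop p (\<alpha>, \<beta>, \<gamma>, \<delta>) m a) * Uop p (\<alpha>, \<beta>, \<gamma>, \<delta>) n a
      = 1 / of_nat p * phase p (k * int \<delta> * (int n ^ 2 - int m ^ 2)) * phase p (2 * (k * (int m - int n)) * int a)" .
  qed
  also have "\<dots> = 1 / of_nat p * phase p (k * int \<delta> * (int n ^ 2 - int m ^ 2)) * (\<Sum>a<p. phase p (2 * (k * (int m - int n)) * int a))"
    by (simp add: sum_distrib_left)
  also have "int p dvd k * (int m - int n) \<longleftrightarrow> m = n"
    using k mn eq_of_dvd_diff[of m p n] prime_dvd_mult_iff[OF prime_int] by auto
  hence "(\<Sum>a<p. phase p (2 * (k * (int m - int n)) * int a)) = (if m = n then of_nat p else 0)"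
    by (simp add: sum_phase_linear[OF p_pos])
  finally show ?thesis using p_pos by simp
qed

lemma Uop_transpose:
  "\<beta> \<noteq> 0 \<Longrightarrow> j < p \<Longrightarrow> k < p \<Longrightarrow> Uop p (\<alpha>, \<beta>, \<gamma>, \<delta>) j k = Uop p (\<delta>, \<beta>, \<gamma>, \<alpha>) k j"
  by (simp add: Uop_entry algebra_simps)

lemma SL2_swap_diagonal: "(\<alpha>, \<beta>, \<gamma>, \<delta>) \<in> SL2 p \<Longrightarrow> (\<delta>, \<beta>, \<gamma>, \<alpha>) \<in> SL2 p"
  by (simp add: SL2_def mult.commute)

lemma Uop_rows_orthonormal_beta_0:
  assumes F: "(\<alpha>, 0, \<gamma>, \<delta>) \<in> SL2 p" and mn: "m < p" "n < p"
  shows "(\<Sum>a<p. cnj (Uop p (\<alpha>, 0, \<gamma>, \<delta>) m a) * Uop p (\<alpha>, 0, \<gamma>, \<delta>) n a) = (if m = n then 1 else 0)"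
proof -
  have det: "int p dvd (int \<alpha> * int \<delta> - 1)" using SL2_entries[OF F] by simp
  have "(\<Sum>a<p. cnj (Uop p (\<alpha>, 0, \<gamma>, \<delta>) m a) * Uop p (\<alpha>, 0, \<gamma>, \<delta>) n a)
      = (\<Sum>a<p. if a = (\<delta> * m) mod p then (if m = n then 1 else 0) else 0)"
  proof (intro sum.cong refl)
    fix a assume "a \<in> {..<p}"
    hence a: "a < p" by simp
    have "int p dvd (int m - int \<alpha> * int a) \<longleftrightarrow> int p dvd (int a - int \<delta> * int m)"
    proof
      assume "int p dvd (int m - int \<alpha> * int a)"
      thus "int p dvd (int a - int \<delta> * int m)" using det by algebra
    next
      assume "int p dvd (int a - int \<delta> * int m)"
      thus "int p dvd (int m - int \<alpha> * int a)" using det by algebra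
    qed
    hence "m = (\<alpha> * a) mod p \<longleftrightarrow> a = (\<delta> * m) mod p"
      using eq_mod_iff_dvd[OF mn(1), of "\<alpha> * a"] eq_mod_iff_dvd[OF a, of "\<delta> * m"] by simp
    thus "cnj (Uop p (\<alpha>, 0, \<gamma>, \<delta>) m a) * Uop p (\<alpha>, 0, \<gamma>, \<delta>) n a = (if a = (\<delta> * m) mod p then (if m = n then 1 else 0) else 0)"
      using a mn by (auto simp: Uop_entry_beta_0)
  qed
  thus ?thesis using p_pos by (simp add: sum_lessThan_delta)
qed

lemma Uop_cols_orthonormal_beta_0:
  assumes F: "(\<alpha>, 0, \<gamma>, \<delta>) \<in> SL2 p" and mn: "m < p" "n < p"
  shows "(\<Sum>a<p. cnj (Uop p (\<alpha>, 0, \<gamma>, \<delta>) a m) * Uop p (\<alpha>, 0, \<gamma>, \<delta>) a n) = (if m = n then 1 else 0)"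
proof -
  have "int p dvd (int \<alpha> * int \<delta> - 1)" using SL2_entries(5)[OF F] by simp
  hence "\<not> int p dvd int \<alpha>" by (rule not_dvd_if_dvd_mult_minus_1)
  hence inj: "(\<alpha> * m) mod p = (\<alpha> * n) mod p \<Longrightarrow> m = n" using mult_mod_inj[OF _ mn] by blast
  have "(\<Sum>a<p. cnj (Uop p (\<alpha>, 0, \<gamma>, \<delta>) a m) * Uop p (\<alpha>, 0, \<gamma>, \<delta>) a n)
      = (\<Sum>a<p. if a = (\<alpha> * m) mod p then (if m = n then 1 else 0) else 0)"
  proof (intro sum.cong refl)
    fix a assume "a \<in> {..<p}"
    thus "cnj (Uop p (\<alpha>, 0, \<gamma>, \<delta>) a m) * Uop p (\<alpha>, 0, \<gamma>, \<delta>) a n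
        = (if a = (\<alpha> * m) mod p then (if m = n then 1 else 0) else 0)"
      using mn inj by (auto simp: Uop_entry_beta_0)
  qed
  thus ?thesis using p_pos by (simp add: sum_lessThan_delta)
qed

lemma Uop_rows_orthonormal:
  assumes F: "F \<in> SL2 p" and mn: "m < p" "n < p"
  shows "(\<Sum>a<p. cnj (Uop p F m a) * Uop p F n a) = (if m = n then 1 else 0)"
proof -
  obtain \<alpha> \<beta> \<gamma> \<delta> where F_def: "F = (\<alpha>, \<beta>, \<gamma>, \<delta>)" by (cases F)
  show ?thesis
  proof (cases "\<beta> = 0")
    case True
    thus ?thesis using Uop_rows_orthonormal_beta_0[OF _ mn] F unfolding F_def by blast
  next
    case False
    thus ?thesis using Uop_rows_orthonormal_beta_ne_0[OF _ _ mn] F unfolding F_def by blast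
  qed
qed

lemma Uop_cols_orthonormal:
  assumes F: "F \<in> SL2 p" and mn: "m < p" "n < p"
  shows "(\<Sum>a<p. cnj (Uop p F a m) * Uop p F a n) = (if m = n then 1 else 0)"
proof -
  obtain \<alpha> \<beta> \<gamma> \<delta> where F_def: "F = (\<alpha>, \<beta>, \<gamma>, \<delta>)" by (cases F)
  show ?thesis
  proof (cases "\<beta> = 0")
    case True
    thus ?thesis using Uop_cols_orthonormal_beta_0[OF _ mn] F unfolding F_def by blast
  next
    case False
    have "(\<Sum>a<p. cnj (Uop p F a m) * Uop p F a n) = (\<Sum>a<p. cnj (Uop p (\<delta>, \<beta>, \<gamma>, \<alpha>) m a) * Uop p (\<delta>, \<beta>, \<gamma>, \<alpha>) n a)"
      unfolding F_def by (intro sum.cong refl) (simp only: Uop_transpose[OF False _ mn(1)] Uop_transpose[OF False _ mn(2)] lessThan_iff)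
    also have "\<dots> = (if m = n then 1 else 0)"
      using Uop_rows_orthonormal_beta_ne_0[OF SL2_swap_diagonal False mn] F unfolding F_def by blast
    finally show ?thesis .
  qed
qed

lemma inner2_Jstate_same_F:
  assumes F: "F \<in> SL2 p" and u: "u \<in> Zp2 p" and v: "v \<in> Zp2 p"
  shows "inner2 p (Jstate p F u) (Jstate p F v) = (if u = v then 1 else 0)"
proof -
  obtain u1 u2 v1 v2 where uv: "u = (u1, u2)" "v = (v1, v2)" "u1 < p" "u2 < p" "v1 < p" "v2 < p"
    using u v by (auto simp: Zp2_def)
  define mu where "mu = (\<lambda>b. (b + p - u1) mod p)"
  define mv where "mv = (\<lambda>b. (b + p - v1) mod p)"
  define c where "c = cnj (phase p (int (u1 * u2))) * phase p (int (v1 * v2))"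
  have mup: "mu b < p" "mv b < p" for b using p_pos by (auto simp: mu_def mv_def)
  have row: "(\<Sum>a<p. cnj (Cliff p F u b a) * Cliff p F v b a)
     = (if u1 = v1 then c * phase p (2 * (int v2 - int u2) * int (mu b)) else 0)" if b: "b < p" for b
  proof -
    have "(\<Sum>a<p. cnj (Cliff p F u b a) * Cliff p F v b a)
       = (\<Sum>a<p. (cnj (phase p (int (u1 * u2)) * phase p (2 * int (u2 * mu b))) * (phase p (int (v1 * v2)) * phase p (2 * int (v2 * mv b))))
                * (cnj (Uop p F (mu b) a) * Uop p F (mv b) a))"
      by (intro sum.cong refl) (simp add: Cliff_entry b uv mu_def mv_def mult_ac)
    also have "\<dots> = (cnj (phase p (int (u1 * u2)) * phase p (2 * int (u2 * mu b))) * (phase p (int (v1 * v2)) * phase p (2 * int (v2 * mv b))))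
                * (if mu b = mv b then 1 else 0)"
      by (simp add: sum_distrib_left[symmetric] Uop_rows_orthonormal[OF F mup(1) mup(2)])
    also have "mu b = mv b \<longleftrightarrow> u1 = v1" using sub_mod_eq_iff_right uv by (simp add: mu_def mv_def)
    moreover have "cnj (phase p (2 * int (u2 * mu b))) * phase p (2 * int (v2 * mu b)) = phase p (2 * (int v2 - int u2) * int (mu b))"
      by (simp only: cnj_phase_mult) (simp add: algebra_simps)
    ultimately show ?thesis by (auto simp: c_def mu_def mv_def mult_ac)
  qed
  have "inner2 p (Jstate p F u) (Jstate p F v) = (\<Sum>b<p. if u1 = v1 then c * phase p (2 * (int v2 - int u2) * int (mu b)) else 0) / of_nat p"
    unfolding inner2_Jstate by (rule arg_cong[where f = "\<lambda>x. x / of_nat p"], rule sum.cong[OF refl]) (simp add: row)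
  also have "\<dots> = (if u = v then 1 else 0)"
  proof (cases "u1 = v1")
    case True
    have "int p dvd (int v2 - int u2) \<longleftrightarrow> u2 = v2" using eq_of_dvd_diff[of v2 p u2] uv by auto
    hence "(\<Sum>b<p. phase p (2 * (int v2 - int u2) * int b)) = (if u2 = v2 then of_nat p else 0)"
      by (simp only: sum_phase_linear[OF p_pos])
    moreover have "(\<Sum>b<p. phase p (2 * (int v2 - int u2) * int (mu b))) = (\<Sum>b<p. phase p (2 * (int v2 - int u2) * int b))"
      unfolding mu_def by (rule sum_lessThan_sub_mod[OF uv(3)])
    ultimately show ?thesis using True uv p_pos by (simp add: sum_distrib_left[symmetric] c_def)
  qed (use uv in simp)
  finally show ?thesis .
qed

lemma Jstate_inj_on: "F \<in> SL2 p \<Longrightarrow> inj_on (Jstate p F) (Zp2 p)"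
  by (rule inj_onI) (metis inner2_Jstate_same_F zero_neq_one)

lemma sum_cnj_Jstate_mult:
  assumes F: "F \<in> SL2 p" and ab: "a < p" "a' < p" "b < p" "b' < p"
  shows "(\<Sum>u\<in>Zp2 p. cnj (Jstate p F u (a', b')) * Jstate p F u (a, b)) = (if a = a' \<and> b = b' then 1 else 0)"
proof -
  define U where "U = (\<lambda>u1. cnj (Uop p F ((b + p - u1) mod p) a') * Uop p F ((b + p - u1) mod p) a)"
  have col: "(\<Sum>u2<p. cnj (Cliff p F (u1, u2) b' a') * Cliff p F (u1, u2) b a) = (if b = b' then of_nat p * U u1 else 0)"
    if u1: "u1 < p" for u1
  proof -
    define m where "m = (b + p - u1) mod p"
    define m' where "m' = (b' + p - u1) mod p"
    have "(\<Sum>u2<p. cnj (Cliff p F (u1, u2) b' a') * Cliff p F (u1, u2) b a)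
       = (\<Sum>u2<p. cnj (Uop p F m' a') * Uop p F m a * phase p (2 * (int m - int m') * int u2))"
    proof (intro sum.cong refl)
      fix u2
      have "cnj (phase p (2 * int (u2 * m'))) * phase p (2 * int (u2 * m)) = phase p (2 * (int m - int m') * int u2)"
        by (simp only: cnj_phase_mult) (simp add: algebra_simps)
      thus "cnj (Cliff p F (u1, u2) b' a') * Cliff p F (u1, u2) b a = cnj (Uop p F m' a') * Uop p F m a * phase p (2 * (int m - int m') * int u2)"
        using ab u1 by (simp add: Cliff_entry m_def[symmetric] m'_def[symmetric] mult_ac)
    qed
    also have "\<dots> = cnj (Uop p F m' a') * Uop p F m a * (\<Sum>u2<p. phase p (2 * (int m - int m') * int u2))"
      by (simp only: sum_distrib_left)
    also have "int p dvd (int m - int m') \<longleftrightarrow> b = b'"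
      using eq_of_dvd_diff[of m p m'] sub_mod_eq_iff_left[of b p b' u1] ab u1 p_pos by (auto simp: m_def m'_def)
    hence "(\<Sum>u2<p. phase p (2 * (int m - int m') * int u2)) = (if b = b' then of_nat p else 0)"
      by (simp only: sum_phase_linear[OF p_pos])
    finally show ?thesis by (simp add: U_def m_def m'_def)
  qed
  have "(\<Sum>u\<in>Zp2 p. cnj (Jstate p F u (a', b')) * Jstate p F u (a, b))
      = (\<Sum>u1<p. \<Sum>u2<p. cnj (Cliff p F (u1, u2) b' a') * Cliff p F (u1, u2) b a) / of_nat p"
    by (simp add: sum_Zp2 cnj_Jstate_mult ab sum_divide_distrib)
  also have "\<dots> = (\<Sum>u1<p. if b = b' then of_nat p * U u1 else 0) / of_nat p"
    by (rule arg_cong[where f = "\<lambda>x. x / of_nat p"], rule sum.cong[OF refl]) (simp add: col)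
  also have "\<dots> = (if b = b' then (\<Sum>u1<p. U u1) else 0)"
    using p_pos by (simp add: sum_distrib_left[symmetric])
  also have "(\<Sum>u1<p. U u1) = (\<Sum>m<p. cnj (Uop p F m a') * Uop p F m a)"
    unfolding U_def by (rule sum_lessThan_reflect[OF ab(3)])
  also have "\<dots> = (if a' = a then 1 else 0)" by (rule Uop_cols_orthonormal[OF F ab(2) ab(1)])
  finally show ?thesis by auto
qed

lemma is_onb_basisF:
  assumes F: "F \<in> SL2 p"
  shows "is_onb p (basisF p F)"
  unfolding is_onb_def
proof (intro conjI ballI)
  show "finite (basisF p F)" unfolding basisF_def Zp2_def by simp
  show "basisF p F \<subseteq> V2 p" unfolding basisF_def using Jstate_in_V2 by blast
next
  fix x y assume "x \<in> basisF p F" "y \<in> basisF p F"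
  then obtain u v where uv: "u \<in> Zp2 p" "v \<in> Zp2 p" "x = Jstate p F u" "y = Jstate p F v"
    unfolding basisF_def by blast
  have "x = y \<longleftrightarrow> u = v" using inj_onD[OF Jstate_inj_on[OF F]] uv by blast
  thus "inner2 p x y = (if x = y then 1 else 0)" using inner2_Jstate_same_F[OF F uv(1,2)] uv by simp
next
  fix \<psi> assume \<psi>: "\<psi> \<in> V2 p"
  show "\<psi> = (\<lambda>ab. \<Sum>x\<in>basisF p F. inner2 p x \<psi> * x ab)"
  proof
    fix ab :: "nat \<times> nat"
    obtain a b where ab: "ab = (a, b)" by (cases ab)
    have "(\<Sum>x\<in>basisF p F. inner2 p x \<psi> * x ab) = (\<Sum>u\<in>Zp2 p. inner2 p (Jstate p F u) \<psi> * Jstate p F u ab)"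
      unfolding basisF_def by (rule sum.reindex[OF Jstate_inj_on[OF F], unfolded comp_def])
    also have "\<dots> = (\<Sum>a'<p. \<Sum>b'<p. \<psi> (a', b') * (\<Sum>u\<in>Zp2 p. cnj (Jstate p F u (a', b')) * Jstate p F u (a, b)))"
      unfolding inner2_def sum_distrib_right sum_distrib_left ab
      by (subst sum.swap, rule sum.cong[OF refl], subst sum.swap) (simp only: mult_ac)
    also have "\<dots> = \<psi> ab"
    proof (cases "a < p \<and> b < p")
      case True
      thus ?thesis
        by (simp add: sum_cnj_Jstate_mult[OF F] ab if_distrib[of "\<lambda>x. _ * x"] sum_lessThan_delta2 cong: if_cong)
    next
      case False
      thus ?thesis using \<psi> ab Jstate_eq_0 unfolding V2_def by auto
    qed
    finally show "\<psi> ab = (\<Sum>x\<in>basisF p F. inner2 p x \<psi> * x ab)" by simp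
  qed
qed

lemma max_ent_Jstate:
  assumes F: "F \<in> SL2 p" and u: "u \<in> Zp2 p"
  shows "max_ent p (Jstate p F u)"
  unfolding max_ent_def
proof (intro conjI allI impI)
  show "Jstate p F u \<in> V2 p" by (rule Jstate_in_V2)
  show "inner2 p (Jstate p F u) (Jstate p F u) = 1" using inner2_Jstate_same_F[OF F u u] by simp
  obtain u1 u2 where uu: "u = (u1, u2)" "u1 < p" using u by (auto simp: Zp2_def)
  fix a a' assume a: "a < p" "a' < p"
  have "Jstate p F u (a, b) * cnj (Jstate p F u (a', b))
      = cnj (Uop p F ((b + p - u1) mod p) a') * Uop p F ((b + p - u1) mod p) a / of_nat p" if b: "b < p" for b
  proof -
    have "Jstate p F u (a, b) * cnj (Jstate p F u (a', b)) = cnj (Cliff p F u b a') * Cliff p F u b a / of_nat p"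
      using cnj_Jstate_mult[OF a] by (simp only: mult.commute)
    thus ?thesis using a b uu by (simp only: Cliff_entry cnj_triple_mult cnj_phase_mult_self mult_1_right)
  qed
  hence "(\<Sum>b<p. Jstate p F u (a, b) * cnj (Jstate p F u (a', b)))
      = (\<Sum>b<p. cnj (Uop p F ((b + p - u1) mod p) a') * Uop p F ((b + p - u1) mod p) a) / of_nat p"
    unfolding sum_divide_distrib by (intro sum.cong refl) simp
  also have "\<dots> = (\<Sum>m<p. cnj (Uop p F m a') * Uop p F m a) / of_nat p"
    using sum_lessThan_sub_mod[OF uu(2), of "\<lambda>m. cnj (Uop p F m a') * Uop p F m a"] by simp
  also have "\<dots> = (if a = a' then 1 / of_nat p else 0)"
    using Uop_cols_orthonormal[OF F a(2) a(1)] by auto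
  finally show "(\<Sum>b<p. Jstate p F u (a, b) * cnj (Jstate p F u (a', b))) = (if a = a' then 1 / of_nat p else 0)" .
qed

end

text \<open>The trace of \<open>adj(F\<^sub>1) F\<^sub>2\<close> computed over \<open>\<int>\<close>; for \<open>F\<^sub>1 \<in> SL(2,\<int>\<^sub>p)\<close> it is
  \<open>Tr(F\<^sub>1\<^sup>-\<^sup>1 F\<^sub>2)\<close> mod \<open>p\<close>.\<close>

definition tr_adj_mul :: "mat2 \<Rightarrow> mat2 \<Rightarrow> int" where
  "tr_adj_mul F1 F2 = (case F1 of (a1, b1, c1, d1) \<Rightarrow> case F2 of (a2, b2, c2, d2) \<Rightarrow>
     int d1 * int a2 - int b1 * int c2 - int c1 * int b2 + int a1 * int d2)"

lemma tr_adj_mul_commute: "tr_adj_mul F1 F2 = tr_adj_mul F2 F1"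
  by (cases F1, cases F2) (simp add: tr_adj_mul_def algebra_simps)

context prime_modulus
begin

lemma m2tr_inv_mul_cong:
  assumes F1: "F1 \<in> SL2 p" and F2: "F2 \<in> SL2 p"
  shows "int p dvd (int (m2tr p (m2mul p (m2inv p F1) F2)) - tr_adj_mul F1 F2)"
proof -
  obtain a1 b1 c1 d1 where f1: "F1 = (a1, b1, c1, d1)" by (cases F1)
  obtain a2 b2 c2 d2 where f2: "F2 = (a2, b2, c2, d2)" by (cases F2)
  have lt: "b1 \<le> p" "c1 \<le> p" using SL2_entries F1 f1 by (auto simp: less_imp_le)
  define bb where "bb = (p - b1) mod p"
  define cc where "cc = (p - c1) mod p"
  define TL where "TL = (d1 * a2 + bb * c2) mod p"
  define BR where "BR = (cc * b2 + a1 * d2) mod p"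
  have tr: "m2tr p (m2mul p (m2inv p F1) F2) = (TL + BR) mod p"
    by (simp add: f1 f2 m2inv_def m2mul_def m2tr_def TL_def BR_def bb_def cc_def)
  have "int p dvd (int ((TL + BR) mod p) - (int TL + int BR))" by (rule dvd_add_mod_diff)
  moreover have "int p dvd (int TL - (int d1 * int a2 + int bb * int c2))"
    using dvd_mod_diff[of p "d1 * a2 + bb * c2"] by (simp add: TL_def)
  moreover have "int p dvd (int BR - (int cc * int b2 + int a1 * int d2))"
    using dvd_mod_diff[of p "cc * b2 + a1 * d2"] by (simp add: BR_def)
  moreover have "int p dvd (int bb - (0 - int b1))" "int p dvd (int cc - (0 - int c1))"
    using dvd_sub_mod_diff[OF lt(1), of 0] dvd_sub_mod_diff[OF lt(2), of 0] by (simp_all add: bb_def cc_def)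
  ultimately have "int p dvd (int ((TL + BR) mod p) - (int d1 * int a2 - int b1 * int c2 - int c1 * int b2 + int a1 * int d2))"
    by algebra
  thus ?thesis unfolding tr by (simp add: f1 f2 tr_adj_mul_def)
qed

lemma not_dvd_tr_adj_mul_minus_2:
  assumes F1: "F1 \<in> SL2 p" and F2: "F2 \<in> SL2 p" and tr: "m2tr p (m2mul p (m2inv p F1) F2) \<noteq> 2 mod p"
  shows "\<not> int p dvd (tr_adj_mul F1 F2 - 2)"
proof
  assume "int p dvd (tr_adj_mul F1 F2 - 2)"
  hence "int p dvd (int (m2tr p (m2mul p (m2inv p F1) F2)) - int 2)"
    using m2tr_inv_mul_cong[OF F1 F2] by simp algebra
  moreover have "m2tr p (m2mul p (m2inv p F1) F2) < p"
    using p_pos by (cases F1, cases F2) (simp add: m2tr_def m2mul_def m2inv_def)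
  ultimately show False using tr eq_mod_iff_dvd by blast
qed

lemma Cliff_entry_beta_ne_0:
  assumes \<beta>: "\<beta> \<noteq> 0" and jk: "j < p" "k < p" "u1 < p" and x: "int p dvd (x - (int j - int u1))"
  shows "Cliff p (\<alpha>, \<beta>, \<gamma>, \<delta>) (u1, u2) j k = phase p (int (u1 * u2)) / complex_of_real (sqrt (real p)) *
    phase p (2 * int u2 * x + int (zinv p \<beta>) * (int \<alpha> * int k ^ 2 - 2 * x * int k + int \<delta> * x ^ 2))"
proof -
  define \<kappa> where "\<kappa> = int (zinv p \<beta>)"
  define m where "m = (j + p - u1) mod p"
  have "m < p" using p_pos by (simp add: m_def)
  hence "Cliff p (\<alpha>, \<beta>, \<gamma>, \<delta>) (u1, u2) j k = phase p (int (u1 * u2)) / complex_of_real (sqrt (real p)) *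
      phase p (2 * int u2 * int m + \<kappa> * (int \<alpha> * int k ^ 2 - 2 * int m * int k + int \<delta> * int m ^ 2))"
    using jk \<beta> by (simp add: Cliff_entry Uop_entry phase_add m_def[symmetric] \<kappa>_def mult_ac)
  also have d: "int p dvd (int m - x)"
    using dvd_sub_mod_diff[of u1 p j] jk x unfolding m_def by simp algebra
  have "phase p (2 * int u2 * int m + \<kappa> * (int \<alpha> * int k ^ 2 - 2 * int m * int k + int \<delta> * int m ^ 2))
       = phase p (2 * int u2 * x + \<kappa> * (int \<alpha> * int k ^ 2 - 2 * x * int k + int \<delta> * x ^ 2))"
    by (rule phase_quadratic_cong'[OF p_pos d, of _ "\<kappa> * int \<delta>" "int u2 - \<kappa> * int k" "\<kappa> * int \<alpha> * int k ^ 2"])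
      (simp add: algebra_simps power2_eq_square)
  finally show ?thesis by (simp add: \<kappa>_def)
qed

lemma Cliff_entry_beta_0:
  assumes jk: "j < p" "k < p" "u1 < p"
  shows "Cliff p (\<alpha>, 0, \<gamma>, \<delta>) (u1, u2) j k = (if j = (\<alpha> * k + u1) mod p
    then phase p (int (u1 * u2) + 2 * int u2 * (int \<alpha> * int k) + int (\<alpha> * \<gamma> * k ^ 2)) else 0)"
proof -
  have "(j + p - u1) mod p = (\<alpha> * k) mod p \<longleftrightarrow> j = (\<alpha> * k + u1) mod p"
    using eq_add_mod_iff_eq_sub_mod[of "(\<alpha> * k) mod p" p j u1] jk p_pos by (auto simp: mod_add_left_eq)
  moreover have "phase p (2 * int (u2 * ((\<alpha> * k) mod p))) = phase p (2 * (int u2 * (int \<alpha> * int k)))"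
    using dvd_mod_diff[of p "\<alpha> * k"] by (intro phase_double_cong[OF p_pos]) (simp add: right_diff_distrib[symmetric])
  ultimately show ?thesis using jk by (auto simp: Cliff_entry Uop_entry_beta_0 phase_add mult_ac)
qed

lemma linear_congruence_unique:
  assumes A: "\<not> int p dvd A"
  shows "\<exists>!x. x < p \<and> int p dvd (A * int x + B)"
proof -
  have inj: "x = y" if "x < p" "y < p" "int p dvd (A * int x - A * int y)" for x y
  proof -
    have "int p dvd A * (int x - int y)" using that(3) by (simp add: right_diff_distrib)
    hence "int p dvd (int x - int y)" using A prime_dvd_mult_iff[OF prime_int] by blast
    thus ?thesis using eq_of_dvd_diff that by blast
  qed
  define f where "f = (\<lambda>x. nat ((A * int x + B) mod int p))"
  have "inj_on f {..<p}"
  proof (rule inj_onI)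
    fix x y assume "x \<in> {..<p}" "y \<in> {..<p}" "f x = f y"
    hence "(A * int x + B) mod int p = (A * int y + B) mod int p" "x < p" "y < p"
      using p_pos by (simp_all add: f_def eq_nat_nat_iff pos_mod_sign)
    thus "x = y" using inj by (simp add: mod_eq_dvd_iff)
  qed
  moreover have "f ` {..<p} \<subseteq> {..<p}" using p_pos by (auto simp: f_def nat_less_iff)
  ultimately have "f ` {..<p} = {..<p}" by (intro endo_inj_surj) auto
  hence "0 \<in> f ` {..<p}" using p_pos by simp
  then obtain x where "x < p" "f x = 0" by auto
  moreover have "0 \<le> (A * int x + B) mod int p" using p_pos by simp
  ultimately have ex: "x < p \<and> int p dvd (A * int x + B)" by (simp add: f_def dvd_eq_mod_eq_0)
  show ?thesis
  proof (rule ex1I[of _ x])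
    fix y assume y: "y < p \<and> int p dvd (A * int y + B)"
    hence "int p dvd ((A * int y + B) - (A * int x + B))" using ex by (blast intro: dvd_diff)
    thus "y = x" using inj[of y x] ex y by simp
  qed (fact ex)
qed

lemma cmod_inner2_Jstate_beta_ne_0:
  assumes F1: "(a1, b1, c1, d1) \<in> SL2 p" and F2: "(a2, b2, c2, d2) \<in> SL2 p"
    and b: "b1 \<noteq> 0" "b2 \<noteq> 0" and T: "\<not> int p dvd (tr_adj_mul (a1, b1, c1, d1) (a2, b2, c2, d2) - 2)"
    and uv: "u1 < p" "v1 < p"
  shows "cmod (inner2 p (Jstate p (a1, b1, c1, d1) (u1, u2)) (Jstate p (a2, b2, c2, d2) (v1, v2))) = 1 / real p"
proof -
  define k1 where "k1 = int (zinv p b1)"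
  define k2 where "k2 = int (zinv p b2)"
  have i1: "int p dvd (int b1 * k1 - 1)" and i2: "int p dvd (int b2 * k2 - 1)"
    using dvd_mult_zinv_minus_1 b SL2_entries[OF F1] SL2_entries[OF F2] unfolding k1_def k2_def by simp_all
  define A where "A = k2 * int a2 - k1 * int a1"
  define C where "C = k2 * int d2 - k1 * int d1"
  define B where "B = k1 - k2"
  define D where "D = k2 * int v1 - k1 * int u1"
  define G where "G = k1 * int d1 * int u1 - k2 * int d2 * int v1 - int u2 + int v2"
  define K where "K = k2 * int d2 * int v1 ^ 2 - k1 * int d1 * int u1 ^ 2 - 2 * int v1 * int v2 + 2 * int u1 * int u2"
  define c where "c = cnj (phase p (int (u1 * u2))) * phase p (int (v1 * v2)) / of_nat p"
  have nd: "\<not> int p dvd (A * C - B ^ 2)"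
  proof
    assume "int p dvd (A * C - B ^ 2)"
    hence "int p dvd (int b1 * int b2 * (tr_adj_mul (a1, b1, c1, d1) (a2, b2, c2, d2) - 2))"
      using i1 i2 SL2_entries(5)[OF F1] SL2_entries(5)[OF F2]
      unfolding A_def B_def C_def tr_adj_mul_def by simp algebra
    moreover have "\<not> int p dvd int b1" "\<not> int p dvd int b2"
      using b SL2_entries[OF F1] SL2_entries[OF F2] eq_of_dvd_diff[of _ p 0] by auto
    ultimately show False using T prime_dvd_mult_iff[OF prime_int] by blast
  qed
  have entry: "cnj (Cliff p (a1, b1, c1, d1) (u1, u2) b a) * Cliff p (a2, b2, c2, d2) (v1, v2) b a
      = c * phase p (A * int a ^ 2 + C * int b ^ 2 + 2 * (B * int a * int b + D * int a + G * int b) + K)"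
    if ab: "a < p" "b < p" for a b
  proof -
    have "cnj (Cliff p (a1, b1, c1, d1) (u1, u2) b a) * Cliff p (a2, b2, c2, d2) (v1, v2) b a
        = c * phase p ((2 * int v2 * (int b - int v1) + k2 * (int a2 * int a ^ 2 - 2 * (int b - int v1) * int a + int d2 * (int b - int v1) ^ 2))
                     - (2 * int u2 * (int b - int u1) + k1 * (int a1 * int a ^ 2 - 2 * (int b - int u1) * int a + int d1 * (int b - int u1) ^ 2)))"
      using ab uv b by (simp only: Cliff_entry_beta_ne_0[where x = "int b - int u1"] Cliff_entry_beta_ne_0[where x = "int b - int v1"]
          diff_self dvd_0_right not_False_eq_True simp_thms cnj_div_sqrt_mult_mult cnj_phase_mult k1_def[symmetric] k2_def[symmetric] c_def)
    thus ?thesis unfolding A_def B_def C_def D_def G_def K_def by (simp only: c_def) (simp add: algebra_simps power2_eq_square)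
  qed
  have "inner2 p (Jstate p (a1, b1, c1, d1) (u1, u2)) (Jstate p (a2, b2, c2, d2) (v1, v2))
      = c * (\<Sum>a<p. \<Sum>b<p. phase p (A * int a ^ 2 + C * int b ^ 2 + 2 * (B * int a * int b + D * int a + G * int b) + K)) / of_nat p"
    unfolding inner2_Jstate by (subst sum.swap) (simp add: entry sum_distrib_left)
  moreover have "cmod c = 1 / real p" by (simp add: c_def norm_divide norm_mult)
  ultimately show ?thesis using cmod_gauss_sum_2[OF nd] p_pos by (simp add: norm_mult norm_divide)
qed

text \<open>A column of \<open>C\<^sub>(\<^sub>F\<^sub>|\<^sub>u\<^sub>)\<close> with \<open>\<beta> = 0\<close> has a single nonzero entry, in row
  \<open>\<alpha>a + u\<^sub>1\<close>.\<close>

lemma sum_cnj_Cliff_beta_0_mult: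
  fixes a1 c1 d1 a2 b2 c2 d2 u1 u2 v1 v2 a :: nat
  assumes b2: "b2 \<noteq> 0" and a: "a < p" and uv: "u1 < p" "v1 < p"
  defines "k2 \<equiv> int (zinv p b2)" and "w \<equiv> int u1 - int v1"
  defines "A \<equiv> - int a1 * int c1 + k2 * (int a2 - 2 * int a1 + int d2 * int a1 ^ 2)"
    and "D \<equiv> - int u2 * int a1 + int v2 * int a1 - k2 * w + k2 * int d2 * int a1 * w"
    and "K \<equiv> 2 * int v2 * w + k2 * int d2 * w ^ 2 + int (v1 * v2) - int (u1 * u2)"
  shows "(\<Sum>b<p. cnj (Cliff p (a1, 0, c1, d1) (u1, u2) b a) * Cliff p (a2, b2, c2, d2) (v1, v2) b a)
      = 1 / complex_of_real (sqrt (real p)) * phase p (A * int a ^ 2 + 2 * D * int a + K)"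
proof -
  define bs where "bs = (a1 * a + u1) mod p"
  define X where "X = int (u1 * u2) + 2 * int u2 * (int a1 * int a) + int (a1 * c1 * a ^ 2)"
  define x where "x = int a1 * int a + w"
  define \<Psi> where "\<Psi> = 2 * int v2 * x + k2 * (int a2 * int a ^ 2 - 2 * x * int a + int d2 * x ^ 2)"
  have bs: "bs < p" using p_pos by (simp add: bs_def)
  have "(\<Sum>b<p. cnj (Cliff p (a1, 0, c1, d1) (u1, u2) b a) * Cliff p (a2, b2, c2, d2) (v1, v2) b a)
      = (\<Sum>b<p. if b = bs then cnj (phase p X) * Cliff p (a2, b2, c2, d2) (v1, v2) bs a else 0)"
    using a uv by (intro sum.cong refl) (simp add: Cliff_entry_beta_0 bs_def X_def)
  also have "\<dots> = cnj (phase p X) * Cliff p (a2, b2, c2, d2) (v1, v2) bs a"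
    using bs by (simp add: sum_lessThan_delta)
  also have "int p dvd (x - (int bs - int v1))"
    using dvd_mod_diff[of p "a1 * a + u1"] unfolding bs_def x_def w_def by simp algebra
  hence "Cliff p (a2, b2, c2, d2) (v1, v2) bs a = phase p (int (v1 * v2)) / complex_of_real (sqrt (real p)) * phase p \<Psi>"
    using Cliff_entry_beta_ne_0[OF b2 bs a uv(2)] by (simp add: k2_def \<Psi>_def)
  also have "cnj (phase p X) * (phase p (int (v1 * v2)) / complex_of_real (sqrt (real p)) * phase p \<Psi>)
      = 1 / complex_of_real (sqrt (real p)) * phase p (int (v1 * v2) + \<Psi> - X)"
    by (simp add: cnj_phase_mult[symmetric] phase_add mult_ac)
  also have "int (v1 * v2) + \<Psi> - X = A * int a ^ 2 + 2 * D * int a + K"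
    by (simp add: \<Psi>_def X_def x_def A_def D_def K_def algebra_simps power2_eq_square)
  finally show ?thesis .
qed

lemma cmod_inner2_Jstate_beta_0_ne_0:
  assumes F1: "(a1, 0, c1, d1) \<in> SL2 p" and F2: "(a2, b2, c2, d2) \<in> SL2 p"
    and b2: "b2 \<noteq> 0" and T: "\<not> int p dvd (tr_adj_mul (a1, 0, c1, d1) (a2, b2, c2, d2) - 2)"
    and uv: "u1 < p" "v1 < p"
  shows "cmod (inner2 p (Jstate p (a1, 0, c1, d1) (u1, u2)) (Jstate p (a2, b2, c2, d2) (v1, v2))) = 1 / real p"
proof -
  define k2 where "k2 = int (zinv p b2)"
  have i2: "int p dvd (int b2 * k2 - 1)" using dvd_mult_zinv_minus_1[of b2] b2 SL2_entries(2)[OF F2] unfolding k2_def by simp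
  define w where "w = int u1 - int v1"
  define A where "A = - int a1 * int c1 + k2 * (int a2 - 2 * int a1 + int d2 * int a1 ^ 2)"
  define D where "D = - int u2 * int a1 + int v2 * int a1 - k2 * w + k2 * int d2 * int a1 * w"
  define K where "K = 2 * int v2 * w + k2 * int d2 * w ^ 2 + int (v1 * v2) - int (u1 * u2)"
  have nd: "\<not> int p dvd A"
  proof
    assume A: "int p dvd A"
    have "int a1 * (tr_adj_mul (a1, 0, c1, d1) (a2, b2, c2, d2) - 2)
        = int b2 * A - (int a2 - 2 * int a1 + int d2 * int a1 ^ 2) * (int b2 * k2 - 1) + int a2 * (int a1 * int d1 - 1)"
      by (simp add: tr_adj_mul_def A_def algebra_simps power2_eq_square)
    moreover have det1: "int p dvd (int a1 * int d1 - 1)" using SL2_entries(5)[OF F1] by simp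
    ultimately have "int p dvd (int a1 * (tr_adj_mul (a1, 0, c1, d1) (a2, b2, c2, d2) - 2))"
      using A i2 by (simp only:) (rule dvd_add[OF dvd_diff[OF dvd_mult dvd_mult] dvd_mult])
    moreover have "\<not> int p dvd int a1" using det1 by (rule not_dvd_if_dvd_mult_minus_1)
    ultimately show False using T prime_dvd_mult_iff[OF prime_int] by blast
  qed
  have col: "(\<Sum>b<p. cnj (Cliff p (a1, 0, c1, d1) (u1, u2) b a) * Cliff p (a2, b2, c2, d2) (v1, v2) b a)
      = 1 / complex_of_real (sqrt (real p)) * phase p (A * int a ^ 2 + 2 * D * int a + K)" if "a < p" for a
    using sum_cnj_Cliff_beta_0_mult[OF b2 that uv] unfolding A_def D_def K_def w_def k2_def .
  have "inner2 p (Jstate p (a1, 0, c1, d1) (u1, u2)) (Jstate p (a2, b2, c2, d2) (v1, v2))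
      = 1 / complex_of_real (sqrt (real p)) * (\<Sum>a<p. phase p (A * int a ^ 2 + 2 * D * int a + K)) / of_nat p"
    unfolding inner2_Jstate by (subst sum.swap) (simp add: col sum_distrib_left)
  also have "(\<Sum>a<p. phase p (A * int a ^ 2 + 2 * D * int a + K)) = phase p K * (\<Sum>a<p. phase p (A * int a ^ 2 + 2 * D * int a))"
    by (simp add: sum_distrib_left phase_add[symmetric] add.commute)
  finally have "cmod (inner2 p (Jstate p (a1, 0, c1, d1) (u1, u2)) (Jstate p (a2, b2, c2, d2) (v1, v2)))
      = cmod (\<Sum>a<p. phase p (A * int a ^ 2 + 2 * D * int a)) / (sqrt (real p) * real p)"
    by (simp add: norm_mult norm_divide)
  thus ?thesis using cmod_gauss_sum[OF nd, of D] p_pos by simp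
qed

lemma cmod_inner2_Jstate_beta_0:
  assumes F1: "(a1, 0, c1, d1) \<in> SL2 p" and F2: "(a2, 0, c2, d2) \<in> SL2 p"
    and T: "\<not> int p dvd (tr_adj_mul (a1, 0, c1, d1) (a2, 0, c2, d2) - 2)"
    and uv: "u1 < p" "v1 < p"
  shows "cmod (inner2 p (Jstate p (a1, 0, c1, d1) (u1, u2)) (Jstate p (a2, 0, c2, d2) (v1, v2))) = 1 / real p"
proof -
  define X1 where "X1 = (\<lambda>a. phase p (int (u1 * u2) + 2 * int u2 * (int a1 * int a) + int (a1 * c1 * a ^ 2)))"
  define X2 where "X2 = (\<lambda>a. phase p (int (v1 * v2) + 2 * int v2 * (int a2 * int a) + int (a2 * c2 * a ^ 2)))"
  define hit where "hit = (\<lambda>a. (a1 * a + u1) mod p = (a2 * a + v1) mod p)"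
  have "\<not> int p dvd (int a1 - int a2)"
  proof
    assume a12: "int p dvd (int a1 - int a2)"
    have "int a1 * int a2 * (tr_adj_mul (a1, 0, c1, d1) (a2, 0, c2, d2) - 2)
        = (int a1 - int a2) * (int a1 - int a2) + int a2 ^ 2 * (int a1 * int d1 - 1) + int a1 ^ 2 * (int a2 * int d2 - 1)"
      by (simp add: tr_adj_mul_def algebra_simps power2_eq_square)
    moreover have det1: "int p dvd (int a1 * int d1 - 1)" and det2: "int p dvd (int a2 * int d2 - 1)"
      using SL2_entries(5)[OF F1] SL2_entries(5)[OF F2] by simp_all
    ultimately have "int p dvd (int a1 * int a2 * (tr_adj_mul (a1, 0, c1, d1) (a2, 0, c2, d2) - 2))"
      using a12 by (simp only:) (rule dvd_add[OF dvd_add[OF dvd_mult dvd_mult] dvd_mult])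
    moreover have "\<not> int p dvd int a1" "\<not> int p dvd int a2"
      using not_dvd_if_dvd_mult_minus_1[OF det1] not_dvd_if_dvd_mult_minus_1[OF det2] .
    ultimately show False using T prime_dvd_mult_iff[OF prime_int] by blast
  qed
  then obtain a0 where a0: "a0 < p" "int p dvd ((int a1 - int a2) * int a0 + (int u1 - int v1))"
    and a0_unique: "\<And>a. a < p \<Longrightarrow> int p dvd ((int a1 - int a2) * int a + (int u1 - int v1)) \<Longrightarrow> a = a0"
    using linear_congruence_unique by metis
  have hit_iff: "hit a \<longleftrightarrow> a = a0" if "a < p" for a
  proof -
    have "hit a \<longleftrightarrow> int p dvd ((int a1 - int a2) * int a + (int u1 - int v1))"
      unfolding hit_def mod_eq_iff_dvd_diff by (simp add: algebra_simps)
    thus ?thesis using a0 a0_unique that by blast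
  qed
  have col: "(\<Sum>b<p. cnj (Cliff p (a1, 0, c1, d1) (u1, u2) b a) * Cliff p (a2, 0, c2, d2) (v1, v2) b a)
      = (if a = a0 then cnj (X1 a) * X2 a else 0)" if a: "a < p" for a
  proof -
    have "(\<Sum>b<p. cnj (Cliff p (a1, 0, c1, d1) (u1, u2) b a) * Cliff p (a2, 0, c2, d2) (v1, v2) b a)
        = (\<Sum>b<p. if b = (a1 * a + u1) mod p then (if hit a then cnj (X1 a) * X2 a else 0) else 0)"
      using a uv by (intro sum.cong refl) (auto simp: Cliff_entry_beta_0 X1_def X2_def hit_def)
    thus ?thesis using hit_iff[OF a] p_pos by (simp add: sum_lessThan_delta)
  qed
  have "(\<Sum>a<p. \<Sum>b<p. cnj (Cliff p (a1, 0, c1, d1) (u1, u2) b a) * Cliff p (a2, 0, c2, d2) (v1, v2) b a)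
      = (\<Sum>a<p. if a = a0 then cnj (X1 a) * X2 a else 0)"
    by (rule sum.cong[OF refl]) (simp add: col)
  also have "\<dots> = cnj (X1 a0) * X2 a0" using a0 by (simp add: sum_lessThan_delta)
  finally have "inner2 p (Jstate p (a1, 0, c1, d1) (u1, u2)) (Jstate p (a2, 0, c2, d2) (v1, v2)) = cnj (X1 a0) * X2 a0 / of_nat p"
    unfolding inner2_Jstate by (subst sum.swap) simp
  thus ?thesis by (simp add: X1_def X2_def norm_mult norm_divide)
qed

lemma cmod_inner2_Jstate:
  assumes F1: "F1 \<in> SL2 p" and F2: "F2 \<in> SL2 p" and T: "\<not> int p dvd (tr_adj_mul F1 F2 - 2)"
    and u: "u \<in> Zp2 p" and v: "v \<in> Zp2 p"
  shows "cmod (inner2 p (Jstate p F1 u) (Jstate p F2 v)) = 1 / real p"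
proof -
  obtain a1 b1 c1 d1 a2 b2 c2 d2 where f: "F1 = (a1, b1, c1, d1)" "F2 = (a2, b2, c2, d2)"
    by (cases F1, cases F2)
  obtain u1 u2 v1 v2 where uv: "u = (u1, u2)" "v = (v1, v2)" "u1 < p" "v1 < p"
    using u v by (auto simp: Zp2_def)
  consider "b1 = 0" "b2 = 0" | "b1 = 0" "b2 \<noteq> 0" | "b1 \<noteq> 0" "b2 = 0" | "b1 \<noteq> 0" "b2 \<noteq> 0" by blast
  thus ?thesis
  proof cases
    case 1
    thus ?thesis using cmod_inner2_Jstate_beta_0 F1 F2 T uv f by simp
  next
    case 2
    thus ?thesis using cmod_inner2_Jstate_beta_0_ne_0 F1 F2 T uv f by simp
  next
    case 3
    hence "cmod (inner2 p (Jstate p F2 v) (Jstate p F1 u)) = 1 / real p"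
      using cmod_inner2_Jstate_beta_0_ne_0 F1 F2 T uv f by (simp add: tr_adj_mul_commute)
    thus ?thesis by (subst inner2_cnj) simp
  next
    case 4
    thus ?thesis using cmod_inner2_Jstate_beta_ne_0 F1 F2 T uv f by simp
  qed
qed

lemma mub_basisF:
  assumes F1: "F1 \<in> SL2 p" and F2: "F2 \<in> SL2 p" and T: "\<not> int p dvd (tr_adj_mul F1 F2 - 2)"
  shows "mub p (basisF p F1) (basisF p F2)"
  unfolding mub_def basisF_def
  using is_onb_basisF[OF F1] is_onb_basisF[OF F2] cmod_inner2_Jstate[OF F1 F2 T]
  by (auto simp: basisF_def)

end

section \<open>Stabilizer states\<close>

text \<open>The Bell state is stabilised, up to phases, by \<open>D\<^sub>x \<otimes> D\<^sub>(\<^sub>x\<^sub>1\<^sub>,\<^sub>-\<^sub>x\<^sub>2\<^sub>)\<close>;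
  applying \<open>C\<^sub>(\<^sub>F\<^sub>|\<^sub>u\<^sub>)\<close> to the second factor turns the partner \<open>(x\<^sub>1, -x\<^sub>2)\<close> into
  \<open>F (x\<^sub>1, -x\<^sub>2)\<close>.\<close>

definition stab_partner :: "nat \<Rightarrow> mat2 \<Rightarrow> nat \<times> nat \<Rightarrow> nat \<times> nat" where
  "stab_partner p F x = (case F of (\<alpha>, \<beta>, \<gamma>, \<delta>) \<Rightarrow>
     ((\<alpha> * fst x + (p - \<beta>) * snd x) mod p, (\<gamma> * fst x + (p - \<delta>) * snd x) mod p))"

context prime_modulus
begin

lemma sub_mod_sub_mod_commute:
  assumes "y \<le> p" "u \<le> p"
  shows "((b + p - y) mod p + p - u) mod p = ((b + p - u) mod p + p - y) mod p"
proof -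
  have "int p dvd (int (((b + p - y) mod p + p - u) mod p) - ((int b - int y) - int u))"
    using dvd_sub_mod_diff[OF assms(2), of "(b + p - y) mod p"] dvd_sub_mod_diff[OF assms(1), of b] by algebra
  moreover have "int p dvd (int (((b + p - u) mod p + p - y) mod p) - ((int b - int u) - int y))"
    using dvd_sub_mod_diff[OF assms(1), of "(b + p - u) mod p"] dvd_sub_mod_diff[OF assms(2), of b] by algebra
  ultimately have "int p dvd (int (((b + p - y) mod p + p - u) mod p) - int (((b + p - u) mod p + p - y) mod p))"
    by algebra
  thus ?thesis by (rule eq_of_dvd_diff[rotated 2]) (simp_all add: p_pos)
qed

lemma stab_partner_cong:
  assumes F: "(\<alpha>, \<beta>, \<gamma>, \<delta>) \<in> SL2 p" and y: "stab_partner p (\<alpha>, \<beta>, \<gamma>, \<delta>) (x1, x2) = (y1, y2)"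
  shows "y1 < p" "y2 < p"
    "int p dvd (int y1 - (int \<alpha> * int x1 - int \<beta> * int x2))"
    "int p dvd (int y2 - (int \<gamma> * int x1 - int \<delta> * int x2))"
proof -
  have y_def: "y1 = (\<alpha> * x1 + (p - \<beta>) * x2) mod p" "y2 = (\<gamma> * x1 + (p - \<delta>) * x2) mod p"
    using y by (simp_all add: stab_partner_def)
  show "y1 < p" "y2 < p" using p_pos y_def by simp_all
  have "int (\<alpha> * x1 + (p - \<beta>) * x2) = int \<alpha> * int x1 + (int p - int \<beta>) * int x2"
    "int (\<gamma> * x1 + (p - \<delta>) * x2) = int \<gamma> * int x1 + (int p - int \<delta>) * int x2"
    using SL2_entries[OF F] by (simp_all add: of_nat_diff)
  thus "int p dvd (int y1 - (int \<alpha> * int x1 - int \<beta> * int x2))"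
    "int p dvd (int y2 - (int \<gamma> * int x1 - int \<delta> * int x2))"
    using dvd_mod_diff[of p "\<alpha> * x1 + (p - \<beta>) * x2"] dvd_mod_diff[of p "\<gamma> * x1 + (p - \<delta>) * x2"]
    unfolding y_def by algebra+
qed

text \<open>Entrywise form of the covariance \<open>U\<^sub>F D\<^sub>v U\<^sub>F\<^sup>\<dagger> \<propto> D\<^sub>F\<^sub>v\<close> for
  \<open>v = (x\<^sub>1, -x\<^sub>2)\<close>.\<close>

lemma Uop_covariance_beta_ne_0:
  assumes F: "(\<alpha>, \<beta>, \<gamma>, \<delta>) \<in> SL2 p" and nb: "\<beta> \<noteq> 0" and x: "x1 < p" "x2 < p" "y1 < p"
    and y1: "int p dvd (int y1 - (int \<alpha> * int x1 - int \<beta> * int x2))"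
    and y2: "int p dvd (int y2 - (int \<gamma> * int x1 - int \<delta> * int x2))"
  shows "\<exists>c. \<forall>m<p. \<forall>a<p. phase p (2 * int x2 * int a + 2 * int y2 * int m) * Uop p (\<alpha>, \<beta>, \<gamma>, \<delta>) ((m + p - y1) mod p) ((a + p - x1) mod p)
           = c * Uop p (\<alpha>, \<beta>, \<gamma>, \<delta>) m a"
proof -
  have s: "\<alpha> < p" "\<beta> < p" "\<gamma> < p" "\<delta> < p" and det: "int p dvd (int \<alpha> * int \<delta> - int \<beta> * int \<gamma> - 1)"
    using SL2_entries[OF F] by auto
  define k where "k = int (zinv p \<beta>)"
  have ik: "int p dvd (int \<beta> * k - 1)" using dvd_mult_zinv_minus_1[of \<beta>] nb s unfolding k_def by simp
  define Q where "Q = (\<lambda>m a::int. k * (int \<alpha> * a ^ 2 - 2 * m * a + int \<delta> * m ^ 2))"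
  define K where "K = k * (int \<alpha> * int x1 ^ 2 - 2 * int y1 * int x1 + int \<delta> * int y1 ^ 2)"
  define P1 where "P1 = int x2 + k * (int y1 - int \<alpha> * int x1)"
  define P2 where "P2 = int y2 + k * (int x1 - int \<delta> * int y1)"
  have dP1: "int p dvd P1" unfolding P1_def using y1 ik by algebra
  have dP2: "int p dvd P2" unfolding P2_def using y1 y2 ik det by algebra
  show ?thesis
  proof (intro exI allI impI)
    fix m a assume ma: "m < p" "a < p"
    define ms where "ms = (m + p - y1) mod p"
    define as where "as = (a + p - x1) mod p"
    have msp: "ms < p" "as < p" using p_pos by (auto simp: ms_def as_def)
    have dm: "int p dvd (int ms - (int m - int y1))" using dvd_sub_mod_diff[of y1 p m] x by (simp add: ms_def)
    have da: "int p dvd (int as - (int a - int x1))" using dvd_sub_mod_diff[of x1 p a] x by (simp add: as_def)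
    have "phase p (2 * int x2 * int a + 2 * int y2 * int m) * Uop p (\<alpha>, \<beta>, \<gamma>, \<delta>) ms as
        = (1 / complex_of_real (sqrt (real p))) * phase p (2 * int x2 * int a + 2 * int y2 * int m + Q (int ms) (int as))"
      using msp nb by (simp add: Uop_entry Q_def k_def phase_add)
    also have "phase p (2 * int x2 * int a + 2 * int y2 * int m + Q (int ms) (int as)) = phase p (2 * int x2 * int a + 2 * int y2 * int m + Q (int m - int y1) (int as))"
      by (rule phase_quadratic_cong'[OF p_pos dm, of "\<lambda>z. 2 * int x2 * int a + 2 * int y2 * int m + Q z (int as)" "k * int \<delta>" "- k * int as" "2 * int x2 * int a + 2 * int y2 * int m + k * int \<alpha> * int as ^ 2"])
         (simp add: Q_def power2_eq_square algebra_simps)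
    also have "\<dots> = phase p (2 * int x2 * int a + 2 * int y2 * int m + Q (int m - int y1) (int a - int x1))"
      by (rule phase_quadratic_cong'[OF p_pos da, of "\<lambda>z. 2 * int x2 * int a + 2 * int y2 * int m + Q (int m - int y1) z" "k * int \<alpha>" "- k * (int m - int y1)" "2 * int x2 * int a + 2 * int y2 * int m + k * int \<delta> * (int m - int y1) ^ 2"])
         (simp add: Q_def power2_eq_square algebra_simps)
    also have "2 * int x2 * int a + 2 * int y2 * int m + Q (int m - int y1) (int a - int x1) = (Q (int m) (int a) + K) + 2 * int a * P1 + 2 * int m * P2"
      unfolding Q_def K_def P1_def P2_def by algebra
    also have "phase p ((Q (int m) (int a) + K) + 2 * int a * P1 + 2 * int m * P2) = phase p (Q (int m) (int a) + K)"
      by (rule phase_add_multiples[OF p_pos dP1 dP2])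
    finally show "phase p (2 * int x2 * int a + 2 * int y2 * int m) * Uop p (\<alpha>, \<beta>, \<gamma>, \<delta>) ((m + p - y1) mod p) ((a + p - x1) mod p)
        = phase p K * Uop p (\<alpha>, \<beta>, \<gamma>, \<delta>) m a"
      using ma nb by (simp add: ms_def as_def Uop_entry Q_def k_def phase_add mult_ac)
  qed
qed

lemma sub_mod_eq_mult_sub_mod_iff:
  assumes "m < p" "a < p" "x1 < p" "y1 < p" and y1: "int p dvd (int y1 - int \<alpha> * int x1)"
  shows "(m + p - y1) mod p = (\<alpha> * ((a + p - x1) mod p)) mod p \<longleftrightarrow> m = (\<alpha> * a) mod p"
proof -
  define ms where "ms = (m + p - y1) mod p"
  define as where "as = (a + p - x1) mod p"
  have dm: "int p dvd (int ms - (int m - int y1))" using dvd_sub_mod_diff[of y1 p m] assms by (simp add: ms_def)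
  have da: "int p dvd (int as - (int a - int x1))" using dvd_sub_mod_diff[of x1 p a] assms by (simp add: as_def)
  have "ms = (\<alpha> * as) mod p \<longleftrightarrow> int p dvd (int ms - int \<alpha> * int as)"
    using eq_mod_iff_dvd[of ms p] p_pos by (simp add: ms_def)
  also have "\<dots> \<longleftrightarrow> int p dvd (int m - int \<alpha> * int a)"
  proof
    assume "int p dvd (int ms - int \<alpha> * int as)"
    thus "int p dvd (int m - int \<alpha> * int a)" using dm da y1 by algebra
  next
    assume "int p dvd (int m - int \<alpha> * int a)"
    thus "int p dvd (int ms - int \<alpha> * int as)" using dm da y1 by algebra
  qed
  also have "\<dots> \<longleftrightarrow> m = (\<alpha> * a) mod p" using eq_mod_iff_dvd[OF assms(1)] by simp
  finally show ?thesis unfolding ms_def as_def .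
qed

lemma Uop_covariance_beta_0:
  assumes F: "(\<alpha>, 0, \<gamma>, \<delta>) \<in> SL2 p" and x: "x1 < p" "x2 < p" "y1 < p"
    and y1: "int p dvd (int y1 - int \<alpha> * int x1)"
    and y2: "int p dvd (int y2 - (int \<gamma> * int x1 - int \<delta> * int x2))"
  shows "\<exists>c. \<forall>m<p. \<forall>a<p. phase p (2 * int x2 * int a + 2 * int y2 * int m) * Uop p (\<alpha>, 0, \<gamma>, \<delta>) ((m + p - y1) mod p) ((a + p - x1) mod p)
           = c * Uop p (\<alpha>, 0, \<gamma>, \<delta>) m a"
proof -
  have det: "int p dvd (int \<alpha> * int \<delta> - 1)" using SL2_entries(5)[OF F] by simp
  define c where "c = phase p (int \<alpha> * int \<gamma> * int x1 ^ 2)"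
  show ?thesis
  proof (intro exI allI impI)
    fix m a assume ma: "m < p" "a < p"
    define ms where "ms = (m + p - y1) mod p"
    define as where "as = (a + p - x1) mod p"
    have msp: "ms < p" "as < p" using p_pos by (auto simp: ms_def as_def)
    have da: "int p dvd (int as - (int a - int x1))" using dvd_sub_mod_diff[of x1 p a] x by (simp add: as_def)
    have supp: "ms = (\<alpha> * as) mod p \<longleftrightarrow> m = (\<alpha> * a) mod p"
      unfolding ms_def as_def using sub_mod_eq_mult_sub_mod_iff x ma y1 by blast
    show "phase p (2 * int x2 * int a + 2 * int y2 * int m) * Uop p (\<alpha>, 0, \<gamma>, \<delta>) ((m + p - y1) mod p) ((a + p - x1) mod p)
        = c * Uop p (\<alpha>, 0, \<gamma>, \<delta>) m a"
    proof (cases "m = (\<alpha> * a) mod p")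
      case False
      hence "ms \<noteq> (\<alpha> * as) mod p" using supp by simp
      thus ?thesis using False ma msp by (simp add: Uop_entry_beta_0 ms_def[symmetric] as_def[symmetric])
    next
      case True
      hence ms_s: "ms = (\<alpha> * as) mod p" using supp by simp
      have dm2: "int p dvd (int m - int \<alpha> * int a)" using True eq_mod_iff_dvd[OF ma(1)] by simp
      have "phase p (2 * int x2 * int a + 2 * int y2 * int m) * Uop p (\<alpha>, 0, \<gamma>, \<delta>) ms as
          = phase p (2 * int y2 * int m + (2 * int x2 * int a + int \<alpha> * int \<gamma> * int as ^ 2))"
        using ms_s msp by (simp add: Uop_entry_beta_0 phase_add[symmetric] algebra_simps)
      also have "\<dots> = phase p (2 * int y2 * (int \<alpha> * int a) + (2 * int x2 * int a + int \<alpha> * int \<gamma> * int as ^ 2))"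
        by (rule phase_linear_cong[OF p_pos dm2])
      also have "\<dots> = phase p (2 * int y2 * (int \<alpha> * int a) + (2 * int x2 * int a + int \<alpha> * int \<gamma> * (int a - int x1) ^ 2))"
        by (rule phase_quadratic_cong'[OF p_pos da, of "\<lambda>z. 2 * int y2 * (int \<alpha> * int a) + (2 * int x2 * int a + int \<alpha> * int \<gamma> * z ^ 2)" "int \<alpha> * int \<gamma>" 0 "2 * int y2 * (int \<alpha> * int a) + 2 * int x2 * int a"])
           (simp add: algebra_simps)
      also have "2 * int y2 * (int \<alpha> * int a) + (2 * int x2 * int a + int \<alpha> * int \<gamma> * (int a - int x1) ^ 2)
          = (int \<alpha> * int \<gamma> * int a ^ 2 + int \<alpha> * int \<gamma> * int x1 ^ 2) + 2 * int a * (int x2 + int \<alpha> * int y2 - int \<alpha> * int \<gamma> * int x1) + 2 * int m * 0"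
        by algebra
      also have "phase p ((int \<alpha> * int \<gamma> * int a ^ 2 + int \<alpha> * int \<gamma> * int x1 ^ 2) + 2 * int a * (int x2 + int \<alpha> * int y2 - int \<alpha> * int \<gamma> * int x1) + 2 * int m * 0)
          = phase p (int \<alpha> * int \<gamma> * int a ^ 2 + int \<alpha> * int \<gamma> * int x1 ^ 2)"
      proof (rule phase_add_multiples[OF p_pos])
        show "int p dvd (int x2 + int \<alpha> * int y2 - int \<alpha> * int \<gamma> * int x1)" using y2 det by algebra
      qed simp
      finally show ?thesis using True ma by (simp add: ms_def as_def Uop_entry_beta_0 c_def phase_add mult_ac)
    qed
  qed
qed

lemma Uop_covariance:
  assumes F: "F \<in> SL2 p" and x: "x1 < p" "x2 < p" and y: "stab_partner p F (x1, x2) = (y1, y2)"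
  shows "\<exists>c. \<forall>m<p. \<forall>a<p. phase p (2 * int x2 * int a + 2 * int y2 * int m) *
            Uop p F ((m + p - y1) mod p) ((a + p - x1) mod p) = c * Uop p F m a"
proof -
  obtain \<alpha> \<beta> \<gamma> \<delta> where F_def: "F = (\<alpha>, \<beta>, \<gamma>, \<delta>)" by (cases F)
  note y = stab_partner_cong[OF F[unfolded F_def] y[unfolded F_def]]
  show ?thesis
  proof (cases "\<beta> = 0")
    case True
    thus ?thesis using Uop_covariance_beta_0[of \<alpha> \<gamma> \<delta> x1 x2 y1 y2] F x y unfolding F_def by simp
  next
    case False
    thus ?thesis using Uop_covariance_beta_ne_0[of \<alpha> \<beta> \<gamma> \<delta> x1 x2 y1 y2] F x y unfolding F_def by simp
  qed
qed

lemma sum_Dop_mult: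
  assumes "a < p" "x1 < p"
  shows "(\<Sum>a'<p. Dop p (x1, x2) a a' * g a') =
    phase p (int (x1 * x2)) * phase p (2 * int (x2 * ((a + p - x1) mod p))) * g ((a + p - x1) mod p)"
proof -
  have "(\<Sum>a'<p. Dop p (x1, x2) a a' * g a') = (\<Sum>a'<p. if a' = (a + p - x1) mod p
      then phase p (int (x1 * x2)) * phase p (2 * int (x2 * a')) * g a' else 0)"
    by (intro sum.cong refl) (use assms eq_add_mod_iff_eq_sub_mod in \<open>auto simp: Dop_entry\<close>)
  thus ?thesis using p_pos by (simp add: sum_lessThan_delta)
qed

lemma kron_apply_Dop:
  assumes "a < p" "b < p" "x1 < p" "y1 < p"
  shows "kron_apply p (Dop p (x1, x2)) (Dop p (y1, y2)) \<psi> (a, b) =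
    phase p (int (x1 * x2)) * phase p (2 * int (x2 * ((a + p - x1) mod p))) *
    (phase p (int (y1 * y2)) * phase p (2 * int (y2 * ((b + p - y1) mod p))) * \<psi> ((a + p - x1) mod p, (b + p - y1) mod p))"
proof -
  have "kron_apply p (Dop p (x1, x2)) (Dop p (y1, y2)) \<psi> (a, b)
      = (\<Sum>a'<p. Dop p (x1, x2) a a' * (\<Sum>b'<p. Dop p (y1, y2) b b' * \<psi> (a', b')))"
    by (simp add: kron_apply_def sum_distrib_left mult_ac)
  thus ?thesis by (simp only: sum_Dop_mult assms)
qed

lemma Dop_eq_0: "\<not> a < p \<Longrightarrow> Dop p x a a' = 0"
  by (cases x) (simp add: Dop_entry)

lemma Jstate_eigenvector:
  assumes F: "F \<in> SL2 p" and u: "u \<in> Zp2 p" and x: "x \<in> Zp2 p"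
  shows "\<exists>c. kron_apply p (Dop p x) (Dop p (stab_partner p F x)) (Jstate p F u) = (\<lambda>ab. c * Jstate p F u ab)"
proof -
  obtain x1 x2 where xe: "x = (x1, x2)" "x1 < p" "x2 < p" using x by (auto simp: Zp2_def)
  obtain u1 u2 where ue: "u = (u1, u2)" "u1 < p" using u by (auto simp: Zp2_def)
  obtain y1 y2 where ye: "stab_partner p F x = (y1, y2)" by fastforce
  have y1: "y1 < p" using ye p_pos by (cases F) (auto simp: stab_partner_def)
  obtain c where c: "\<And>m a. m < p \<Longrightarrow> a < p \<Longrightarrow> phase p (2 * int x2 * int a + 2 * int y2 * int m) *
      Uop p F ((m + p - y1) mod p) ((a + p - x1) mod p) = c * Uop p F m a"
    using Uop_covariance[OF F xe(2,3)] ye xe(1) by blast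
  define K where "K = - int x2 * int x1 + int y2 * (int u1 - int y1) - int u2 * int y1"
  define cc where "cc = phase p (int (x1 * x2)) * phase p (int (y1 * y2)) * phase p (2 * K) * c"
  have "kron_apply p (Dop p x) (Dop p (stab_partner p F x)) (Jstate p F u) (a, b) = cc * Jstate p F u (a, b)" for a b
  proof (cases "a < p \<and> b < p")
    case True
    hence ab: "a < p" "b < p" by auto
    define as where "as = (a + p - x1) mod p"
    define bs where "bs = (b + p - y1) mod p"
    define m where "m = (b + p - u1) mod p"
    have lt: "as < p" "bs < p" "m < p" using p_pos by (auto simp: as_def bs_def m_def)
    have shift: "(bs + p - u1) mod p = (m + p - y1) mod p"
      using sub_mod_sub_mod_commute[of y1 u1 b] y1 ue by (simp add: bs_def m_def less_imp_le)
    define ms where "ms = (m + p - y1) mod p"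
    have cong: "int p dvd ((int x2 * int as + int y2 * int bs + int u2 * int ms) - ((int x2 * int a + int y2 * int m) + int u2 * int m + K))"
    proof -
      have "(int x2 * int as + int y2 * int bs + int u2 * int ms) - ((int x2 * int a + int y2 * int m) + int u2 * int m + K)
          = int x2 * (int as - (int a - int x1)) + int y2 * (int bs - (int b - int y1))
            + int u2 * (int ms - (int m - int y1)) - int y2 * (int m - (int b - int u1))"
        by (simp add: K_def algebra_simps)
      moreover have "int p dvd (int as - (int a - int x1))" "int p dvd (int bs - (int b - int y1))"
        "int p dvd (int ms - (int m - int y1))" "int p dvd (int m - (int b - int u1))"
        using dvd_sub_mod_diff xe y1 ue unfolding as_def bs_def ms_def m_def by (simp_all add: less_imp_le)
      ultimately show ?thesis by (simp only:) (rule dvd_diff[OF dvd_add[OF dvd_add] ]; rule dvd_mult; assumption)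
    qed
    have "phase p (2 * (int x2 * int as + int y2 * int bs + int u2 * int ms))
        = phase p (2 * int x2 * int a + 2 * int y2 * int m) * phase p (2 * int (u2 * m)) * phase p (2 * K)"
      by (subst phase_double_cong[OF p_pos cong]) (simp add: phase_add[symmetric] algebra_simps)
    moreover have "kron_apply p (Dop p x) (Dop p (stab_partner p F x)) (Jstate p F u) (a, b)
        = phase p (int (x1 * x2)) * phase p (int (y1 * y2)) * phase p (int (u1 * u2)) / complex_of_real (sqrt (real p))
          * phase p (2 * (int x2 * int as + int y2 * int bs + int u2 * int ms))
          * Uop p F ms as"
      using ab lt xe(2,3) ue y1 by (simp add: xe(1) ye[unfolded xe(1)] kron_apply_Dop Jstate_entry Cliff_entry shift phase_add as_def[symmetric] bs_def[symmetric] ms_def[symmetric] mult_ac)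
    moreover have "Jstate p F u (a, b) = phase p (int (u1 * u2)) * phase p (2 * int (u2 * m)) * Uop p F m a / complex_of_real (sqrt (real p))"
      using ab ue by (simp add: Jstate_entry Cliff_entry m_def)
    ultimately show ?thesis using c[OF lt(3) ab(1)] by (simp add: cc_def as_def ms_def mult_ac)
  next
    case False
    thus ?thesis by (auto simp: kron_apply_def Dop_eq_0 Jstate_eq_0)
  qed
  thus ?thesis by (intro exI[of _ cc] ext) (metis surj_pair)
qed

lemma stab_partner_add:
  assumes F: "F \<in> SL2 p"
    and y: "stab_partner p F (x1, x2) = (y1, y2)" and y': "stab_partner p F (x1', x2') = (y1', y2')"
  shows "stab_partner p F ((x1 + x1') mod p, (x2 + x2') mod p) = ((y1 + y1') mod p, (y2 + y2') mod p)"
proof -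
  obtain \<alpha> \<beta> \<gamma> \<delta> where F_def: "F = (\<alpha>, \<beta>, \<gamma>, \<delta>)" by (cases F)
  obtain z1 z2 where z: "stab_partner p F ((x1 + x1') mod p, (x2 + x2') mod p) = (z1, z2)" by fastforce
  note c = stab_partner_cong[OF F[unfolded F_def] y[unfolded F_def]]
  note c' = stab_partner_cong[OF F[unfolded F_def] y'[unfolded F_def]]
  note cz = stab_partner_cong[OF F[unfolded F_def] z[unfolded F_def]]
  have m: "int p dvd (int ((x1 + x1') mod p) - (int x1 + int x1'))" "int p dvd (int ((x2 + x2') mod p) - (int x2 + int x2'))"
    "int p dvd (int ((y1 + y1') mod p) - (int y1 + int y1'))" "int p dvd (int ((y2 + y2') mod p) - (int y2 + int y2'))"
    by (rule dvd_add_mod_diff)+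
  have "int p dvd (int ((y1 + y1') mod p) - int z1)" using c(3) c'(3) cz(3) m(1-3) by algebra
  hence "(y1 + y1') mod p = z1" by (rule eq_of_dvd_diff[rotated 2]) (simp_all add: cz(1) p_pos)
  moreover have "int p dvd (int ((y2 + y2') mod p) - int z2)" using c(4) c'(4) cz(4) m(1,2,4) by algebra
  hence "(y2 + y2') mod p = z2" by (rule eq_of_dvd_diff[rotated 2]) (simp_all add: cz(2) p_pos)
  ultimately show ?thesis using z by simp
qed

lemma symp4_stab_partner:
  assumes F: "F \<in> SL2 p"
    and y: "stab_partner p F (x1, x2) = (y1, y2)" and y': "stab_partner p F (x1', x2') = (y1', y2')"
  shows "symp4 p ((x1, x2), (y1, y2)) ((x1', x2'), (y1', y2')) = 0"
proof -
  obtain \<alpha> \<beta> \<gamma> \<delta> where F_def: "F = (\<alpha>, \<beta>, \<gamma>, \<delta>)" by (cases F)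
  note c = stab_partner_cong[OF F[unfolded F_def] y[unfolded F_def]]
  note c' = stab_partner_cong[OF F[unfolded F_def] y'[unfolded F_def]]
  have "int p dvd (int x1 * int x2' - int x2 * int x1' + int y1 * int y2' - int y2 * int y1')"
    using c(3,4) c'(3,4) SL2_entries(5)[OF F[unfolded F_def]] by algebra
  thus ?thesis by (simp add: symp4_def)
qed

lemma lagrangian_stab_graph:
  assumes F: "F \<in> SL2 p"
  shows "lagrangian p ((\<lambda>x. (x, stab_partner p F x)) ` Zp2 p)"
  unfolding lagrangian_def
proof (intro conjI ballI)
  have partner: "stab_partner p F x \<in> Zp2 p" for x
    using p_pos by (cases F) (auto simp: stab_partner_def Zp2_def)
  thus "(\<lambda>x. (x, stab_partner p F x)) ` Zp2 p \<subseteq> Zp2 p \<times> Zp2 p" by auto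
  have "stab_partner p F (0, 0) = (0, 0)" by (cases F) (simp add: stab_partner_def)
  thus "((0, 0), (0, 0)) \<in> (\<lambda>x. (x, stab_partner p F x)) ` Zp2 p"
    using p_pos by (force simp: Zp2_def)
  have "card ((\<lambda>x. (x, stab_partner p F x)) ` Zp2 p) = card (Zp2 p)"
    by (rule card_image) (auto intro: inj_onI)
  thus "card ((\<lambda>x. (x, stab_partner p F x)) ` Zp2 p) = p ^ 2"
    by (simp add: Zp2_def power2_eq_square)
next
  fix w w' assume "w \<in> (\<lambda>x. (x, stab_partner p F x)) ` Zp2 p" "w' \<in> (\<lambda>x. (x, stab_partner p F x)) ` Zp2 p"
  then obtain x x' where "w = (x, stab_partner p F x)" "w' = (x', stab_partner p F x')" by blast
  moreover obtain x1 x2 x1' x2' where "x = (x1, x2)" "x' = (x1', x2')" by fastforce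
  moreover obtain y1 y2 y1' y2' where "stab_partner p F (x1, x2) = (y1, y2)" "stab_partner p F (x1', x2') = (y1', y2')"
    by fastforce
  ultimately have w: "w = ((x1, x2), (y1, y2))" "stab_partner p F (x1, x2) = (y1, y2)"
    and w': "w' = ((x1', x2'), (y1', y2'))" "stab_partner p F (x1', x2') = (y1', y2')" by simp_all
  show "symp4 p w w' = 0" using symp4_stab_partner[OF F w(2) w'(2)] w w' by simp
  have "add4 p w w' = (((x1 + x1') mod p, (x2 + x2') mod p), stab_partner p F ((x1 + x1') mod p, (x2 + x2') mod p))"
    using stab_partner_add[OF F w(2) w'(2)] w w' by (simp add: add4_def)
  moreover have "((x1 + x1') mod p, (x2 + x2') mod p) \<in> Zp2 p" using p_pos by (simp add: Zp2_def)
  ultimately show "add4 p w w' \<in> (\<lambda>x. (x, stab_partner p F x)) ` Zp2 p" by simp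
qed

lemma stab_state_Jstate:
  assumes F: "F \<in> SL2 p" and u: "u \<in> Zp2 p"
  shows "stab_state p (Jstate p F u)"
  unfolding stab_state_def
proof (intro conjI exI[of _ "(\<lambda>x. (x, stab_partner p F x)) ` Zp2 p"] ballI)
  show "Jstate p F u \<in> V2 p" by (rule Jstate_in_V2)
  show "Jstate p F u \<noteq> (\<lambda>_. 0)"
    using inner2_Jstate_same_F[OF F u u] by (auto simp: inner2_def)
  show "lagrangian p ((\<lambda>x. (x, stab_partner p F x)) ` Zp2 p)" by (rule lagrangian_stab_graph[OF F])
  fix w assume "w \<in> (\<lambda>x. (x, stab_partner p F x)) ` Zp2 p"
  thus "\<exists>c. kron_apply p (Dop p (fst w)) (Dop p (snd w)) (Jstate p F u) = (\<lambda>ab. c * Jstate p F u ab)"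
    using Jstate_eigenvector[OF F u] by auto
qed

end

section \<open>The group \<open>SL(2,\<int>\<^sub>p)\<close> and its Cayley graph\<close>

context prime_modulus
begin

lemma m2mul_cong:
  assumes "m2mul p (a, b, c, d) (a', b', c', d') = (e1, e2, e3, e4)"
  shows "int p dvd (int e1 - (int a * int a' + int b * int c'))" "int p dvd (int e2 - (int a * int b' + int b * int d'))"
    "int p dvd (int e3 - (int c * int a' + int d * int c'))" "int p dvd (int e4 - (int c * int b' + int d * int d'))"
    "e1 < p" "e2 < p" "e3 < p" "e4 < p"
proof -
  have e: "e1 = (a * a' + b * c') mod p" "e2 = (a * b' + b * d') mod p" "e3 = (c * a' + d * c') mod p" "e4 = (c * b' + d * d') mod p"
    using assms by (simp_all add: m2mul_def)
  show "int p dvd (int e1 - (int a * int a' + int b * int c'))" using dvd_mod_diff[of p "a * a' + b * c'"] e by simp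
  show "int p dvd (int e2 - (int a * int b' + int b * int d'))" using dvd_mod_diff[of p "a * b' + b * d'"] e by simp
  show "int p dvd (int e3 - (int c * int a' + int d * int c'))" using dvd_mod_diff[of p "c * a' + d * c'"] e by simp
  show "int p dvd (int e4 - (int c * int b' + int d * int d'))" using dvd_mod_diff[of p "c * b' + d * d'"] e by simp
  show "e1 < p" "e2 < p" "e3 < p" "e4 < p" using e p_pos by simp_all
qed

lemma SL2_intro:
  assumes "a < p" "b < p" "c < p" "d < p" "int p dvd (int a * int d - int b * int c - 1)"
  shows "(a, b, c, d) \<in> SL2 p"
proof -
  have "(int a * int d - int b * int c) mod int p = 1 mod int p" using assms(5) by (simp only: mod_eq_dvd_iff)
  thus ?thesis using assms p_ge_2 by (simp add: SL2_def)
qed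

lemma eq_of_entries_cong:
  "e1 < p \<Longrightarrow> e2 < p \<Longrightarrow> e3 < p \<Longrightarrow> e4 < p \<Longrightarrow> f1 < p \<Longrightarrow> f2 < p \<Longrightarrow> f3 < p \<Longrightarrow> f4 < p \<Longrightarrow>
    int p dvd (int e1 - int f1) \<Longrightarrow> int p dvd (int e2 - int f2) \<Longrightarrow> int p dvd (int e3 - int f3) \<Longrightarrow>
    int p dvd (int e4 - int f4) \<Longrightarrow> (e1, e2, e3, e4) = (f1, f2, f3, f4)"
  using eq_of_dvd_diff by blast

lemma m2mul_closed: "F \<in> SL2 p \<Longrightarrow> G \<in> SL2 p \<Longrightarrow> m2mul p F G \<in> SL2 p"
proof -
  assume F: "F \<in> SL2 p" and G: "G \<in> SL2 p"
  obtain a b c d a' b' c' d' where FG: "F = (a, b, c, d)" "G = (a', b', c', d')" by (cases F, cases G)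
  obtain e1 e2 e3 e4 where e: "m2mul p F G = (e1, e2, e3, e4)" by (cases "m2mul p F G")
  note ce = m2mul_cong[OF e[unfolded FG]]
  have "int p dvd (int e1 * int e4 - int e2 * int e3 - 1)"
    using ce(1-4) SL2_entries(5)[OF F[unfolded FG]] SL2_entries(5)[OF G[unfolded FG]] by algebra
  thus ?thesis using SL2_intro ce(5-8) e by simp
qed

lemma m2mul_assoc:
  assumes "F \<in> SL2 p" "G \<in> SL2 p" "H \<in> SL2 p"
  shows "m2mul p (m2mul p F G) H = m2mul p F (m2mul p G H)"
proof -
  obtain a b c d a' b' c' d' a'' b'' c'' d'' where FGH:
    "F = (a, b, c, d)" "G = (a', b', c', d')" "H = (a'', b'', c'', d'')" by (cases F, cases G, cases H)
  obtain e1 e2 e3 e4 where e: "m2mul p F G = (e1, e2, e3, e4)" by (cases "m2mul p F G")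
  obtain f1 f2 f3 f4 where f: "m2mul p G H = (f1, f2, f3, f4)" by (cases "m2mul p G H")
  obtain g1 g2 g3 g4 where g: "m2mul p (e1, e2, e3, e4) H = (g1, g2, g3, g4)" by (cases "m2mul p (e1, e2, e3, e4) H")
  obtain h1 h2 h3 h4 where h: "m2mul p F (f1, f2, f3, f4) = (h1, h2, h3, h4)" by (cases "m2mul p F (f1, f2, f3, f4)")
  note ce = m2mul_cong[OF e[unfolded FGH]] and cf = m2mul_cong[OF f[unfolded FGH]]
    and cg = m2mul_cong[OF g[unfolded FGH]] and ch = m2mul_cong[OF h[unfolded FGH]]
  have "(g1, g2, g3, g4) = (h1, h2, h3, h4)"
  proof (rule eq_of_entries_cong)
    show "g1 < p" "g2 < p" "g3 < p" "g4 < p" "h1 < p" "h2 < p" "h3 < p" "h4 < p" using cg ch by simp_all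
    show "int p dvd (int g1 - int h1)" "int p dvd (int g2 - int h2)" "int p dvd (int g3 - int h3)" "int p dvd (int g4 - int h4)"
      using ce cf cg ch by algebra+
  qed
  thus ?thesis using e f g h by simp
qed

lemma m2inv_mul:
  assumes F: "F \<in> SL2 p"
  shows "m2inv p F \<in> SL2 p" "m2mul p (m2inv p F) F = (1, 0, 0, 1)"
proof -
  obtain a b c d where F_def: "F = (a, b, c, d)" by (cases F)
  note s = SL2_entries[OF F[unfolded F_def]]
  define b' where "b' = (p - b) mod p"
  define c' where "c' = (p - c) mod p"
  have inv: "m2inv p F = (d, b', c', a)" by (simp add: m2inv_def F_def b'_def c'_def)
  have b': "int p dvd (int b' + int b)" and c': "int p dvd (int c' + int c)"
    using dvd_sub_mod_diff[of b p 0] dvd_sub_mod_diff[of c p 0] s by (simp_all add: b'_def c'_def)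
  have lt: "b' < p" "c' < p" using p_pos by (simp_all add: b'_def c'_def)
  have "int p dvd (int d * int a - int b' * int c' - 1)" using b' c' s(5) by algebra
  thus "m2inv p F \<in> SL2 p" using SL2_intro s lt inv by simp
  obtain e1 e2 e3 e4 where e: "m2mul p (d, b', c', a) (a, b, c, d) = (e1, e2, e3, e4)"
    by (cases "m2mul p (d, b', c', a) (a, b, c, d)")
  note ce = m2mul_cong[OF e]
  have "int e1 - 1 = (int e1 - (int d * int a + int b' * int c)) + int c * (int b' + int b) + (int a * int d - int b * int c - 1)"
    "int e2 - 0 = (int e2 - (int d * int b + int b' * int d)) + int d * (int b' + int b)"
    "int e3 - 0 = (int e3 - (int c' * int a + int a * int c)) + int a * (int c' + int c)"
    "int e4 - 1 = (int e4 - (int c' * int b + int a * int d)) + int b * (int c' + int c) + (int a * int d - int b * int c - 1)"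
    by (simp_all add: algebra_simps)
  hence "int p dvd (int e1 - int 1)" "int p dvd (int e2 - int 0)" "int p dvd (int e3 - int 0)" "int p dvd (int e4 - int 1)"
    unfolding of_nat_1 of_nat_0
    by (simp_all only:) (rule dvd_add[OF dvd_add[OF ce(1) dvd_mult[OF b']] s(5)] dvd_add[OF ce(2) dvd_mult[OF b']]
      dvd_add[OF ce(3) dvd_mult[OF c']] dvd_add[OF dvd_add[OF ce(4) dvd_mult[OF c']] s(5)])+
  moreover have "e1 < p" "e2 < p" "e3 < p" "e4 < p" "1 < p" using ce p_ge_2 by simp_all
  ultimately have "(e1, e2, e3, e4) = (1, 0, 0, 1)" using eq_of_dvd_diff p_pos by blast
  thus "m2mul p (m2inv p F) F = (1, 0, 0, 1)" using inv e F_def by simp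
qed

lemma group_SL2_group: "group (SL2_group p)"
proof (rule groupI)
  have [simp]: "carrier (SL2_group p) = SL2 p" "\<one>\<^bsub>SL2_group p\<^esub> = (1, 0, 0, 1)" "x \<otimes>\<^bsub>SL2_group p\<^esub> y = m2mul p x y" for x y
    by (simp_all add: SL2_group_def)
  show "\<one>\<^bsub>SL2_group p\<^esub> \<in> carrier (SL2_group p)" using p_ge_2 by (simp add: SL2_def)
  fix x y z assume x: "x \<in> carrier (SL2_group p)" and y: "y \<in> carrier (SL2_group p)" and z: "z \<in> carrier (SL2_group p)"
  show "x \<otimes>\<^bsub>SL2_group p\<^esub> y \<in> carrier (SL2_group p)" using x y by (simp add: m2mul_closed)
  show "x \<otimes>\<^bsub>SL2_group p\<^esub> y \<otimes>\<^bsub>SL2_group p\<^esub> z = x \<otimes>\<^bsub>SL2_group p\<^esub> (y \<otimes>\<^bsub>SL2_group p\<^esub> z)"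
    using x y z by (simp add: m2mul_assoc)
  show "\<one>\<^bsub>SL2_group p\<^esub> \<otimes>\<^bsub>SL2_group p\<^esub> x = x"
    using x SL2_entries by (cases x) (simp add: m2mul_def)
  show "\<exists>y\<in>carrier (SL2_group p). y \<otimes>\<^bsub>SL2_group p\<^esub> x = \<one>\<^bsub>SL2_group p\<^esub>"
    using x m2inv_mul[of x] by (intro bexI[of _ "m2inv p x"]) simp_all
qed

lemma inv_SL2_group: "F \<in> SL2 p \<Longrightarrow> inv\<^bsub>SL2_group p\<^esub> F = m2inv p F"
  using group.inv_equality[OF group_SL2_group] m2inv_mul by (simp add: SL2_group_def)

lemma is_clique_SL2_iff:
  "is_clique (SL2_group p) {F \<in> SL2 p. m2tr p F \<noteq> 2 mod p} K \<longleftrightarrow>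
    K \<subseteq> SL2 p \<and> (\<forall>F1\<in>K. \<forall>F2\<in>K. F1 \<noteq> F2 \<longrightarrow> m2tr p (m2mul p (m2inv p F1) F2) \<noteq> 2 mod p)"
proof -
  have adj: "cayley_adj (SL2_group p) {F \<in> SL2 p. m2tr p F \<noteq> 2 mod p} F1 F2 \<longleftrightarrow> m2tr p (m2mul p (m2inv p F1) F2) \<noteq> 2 mod p"
    if "F1 \<in> SL2 p" "F2 \<in> SL2 p" for F1 F2
  proof -
    have "m2mul p (m2inv p F1) F2 \<in> SL2 p" using that m2mul_closed m2inv_mul(1) by blast
    thus ?thesis using that unfolding cayley_adj_def inv_SL2_group[OF that(1)] by (simp add: SL2_group_def)
  qed
  show ?thesis
  proof
    assume "is_clique (SL2_group p) {F \<in> SL2 p. m2tr p F \<noteq> 2 mod p} K"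
    hence "K \<subseteq> SL2 p" "\<forall>F1\<in>K. \<forall>F2\<in>K. F1 \<noteq> F2 \<longrightarrow> cayley_adj (SL2_group p) {F \<in> SL2 p. m2tr p F \<noteq> 2 mod p} F1 F2"
      unfolding is_clique_def by (simp_all add: SL2_group_def)
    thus "K \<subseteq> SL2 p \<and> (\<forall>F1\<in>K. \<forall>F2\<in>K. F1 \<noteq> F2 \<longrightarrow> m2tr p (m2mul p (m2inv p F1) F2) \<noteq> 2 mod p)"
      using adj by (meson subsetD)
  next
    assume "K \<subseteq> SL2 p \<and> (\<forall>F1\<in>K. \<forall>F2\<in>K. F1 \<noteq> F2 \<longrightarrow> m2tr p (m2mul p (m2inv p F1) F2) \<noteq> 2 mod p)"
    thus "is_clique (SL2_group p) {F \<in> SL2 p. m2tr p F \<noteq> 2 mod p} K"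
      unfolding is_clique_def using adj by (simp add: SL2_group_def) (meson subsetD)
  qed
qed

text \<open>In a clique, distinct matrices have distinct first columns, and \<open>(0, 0)\<close> is never a
  first column.\<close>

lemma card_clique_le:
  assumes K: "is_clique (SL2_group p) {F \<in> SL2 p. m2tr p F \<noteq> 2 mod p} K"
  shows "card K \<le> p ^ 2 - 1"
proof -
  have KS: "K \<subseteq> SL2 p" using K is_clique_SL2_iff by blast
  define col where "col = (\<lambda>F::mat2. case F of (a, b, c, d) \<Rightarrow> (a, c))"
  have "inj_on col K"
  proof (rule inj_onI, rule ccontr)
    fix F1 F2 assume F: "F1 \<in> K" "F2 \<in> K" "col F1 = col F2" "F1 \<noteq> F2"
    obtain a1 b1 c1 d1 a2 b2 c2 d2 where f: "F1 = (a1, b1, c1, d1)" "F2 = (a2, b2, c2, d2)" by (cases F1, cases F2)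
    have "a1 = a2" "c1 = c2" using F f by (auto simp: col_def)
    hence "tr_adj_mul F1 F2 - 2 = (int a1 * int d1 - int b1 * int c1 - 1) + (int a2 * int d2 - int b2 * int c2 - 1)"
      unfolding f tr_adj_mul_def by (simp add: algebra_simps)
    hence "int p dvd (tr_adj_mul F1 F2 - 2)"
      using SL2_entries(5) KS F(1,2) f by (metis dvd_add subsetD)
    moreover have "m2tr p (m2mul p (m2inv p F1) F2) \<noteq> 2 mod p" using K F is_clique_SL2_iff by blast
    ultimately show False using not_dvd_tr_adj_mul_minus_2 KS F(1,2) by blast
  qed
  moreover have "col ` K \<subseteq> Zp2 p - {(0, 0)}"
  proof
    fix z assume "z \<in> col ` K"
    then obtain a b c d where F: "(a, b, c, d) \<in> K" "z = (a, c)" by (auto simp: col_def)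
    note s = SL2_entries[OF subsetD[OF KS F(1)]]
    have "(a, c) \<noteq> (0, 0)"
    proof
      assume "(a, c) = (0, 0)"
      hence "int p dvd 1" using s(5) by simp
      thus False using p_ge_2 by simp
    qed
    thus "z \<in> Zp2 p - {(0, 0)}" using F s by (simp add: Zp2_def)
  qed
  ultimately have "card K \<le> card (Zp2 p - {(0, 0)})"
    by (rule card_inj_on_le) (simp add: Zp2_def)
  also have "\<dots> = p ^ 2 - 1" using p_pos by (simp add: Zp2_def power2_eq_square)
  finally show ?thesis .
qed

lemma basisF_inj_on:
  assumes "K \<subseteq> SL2 p" "\<forall>F1\<in>K. \<forall>F2\<in>K. F1 \<noteq> F2 \<longrightarrow> \<not> int p dvd (tr_adj_mul F1 F2 - 2)"
  shows "inj_on (basisF p) K"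
proof (rule inj_onI, rule ccontr)
  fix F1 F2 assume F: "F1 \<in> K" "F2 \<in> K" "basisF p F1 = basisF p F2" "F1 \<noteq> F2"
  have z: "(0, 0) \<in> Zp2 p" using p_pos by (simp add: Zp2_def)
  hence "Jstate p F1 (0, 0) \<in> basisF p F2" using F(3) by (auto simp: basisF_def)
  then obtain v where v: "v \<in> Zp2 p" and eq: "Jstate p F1 (0, 0) = Jstate p F2 v" by (auto simp: basisF_def)
  have "cmod (inner2 p (Jstate p F1 (0, 0)) (Jstate p F2 v)) = 1 / real p"
    using cmod_inner2_Jstate[OF _ _ _ z v] assms F by blast
  moreover have "inner2 p (Jstate p F1 (0, 0)) (Jstate p F2 v) = 1"
    using inner2_Jstate_same_F[OF _ z z, of F1] assms(1) F(1) unfolding eq by auto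
  ultimately show False using p_ge_2 by simp
qed

lemma ent_stab_mub_basisF:
  assumes K: "K \<subseteq> SL2 p" "\<forall>F1\<in>K. \<forall>F2\<in>K. F1 \<noteq> F2 \<longrightarrow> \<not> int p dvd (tr_adj_mul F1 F2 - 2)"
  shows "ent_stab_mub p (card K) (basisF p ` K)"
  unfolding ent_stab_mub_def
proof (intro conjI ballI impI)
  have "finite K" using K(1) finite_subset[of K "{..<p} \<times> {..<p} \<times> {..<p} \<times> {..<p}"] by (auto simp: SL2_def)
  thus "finite (basisF p ` K)" by simp
  show "card (basisF p ` K) = card K" by (rule card_image[OF basisF_inj_on[OF K]])
next
  fix B assume "B \<in> basisF p ` K"
  then obtain F where F: "F \<in> SL2 p" "B = basisF p F" using K by auto
  show "is_onb p B" using is_onb_basisF[OF F(1)] F by simp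
  fix \<psi> assume "\<psi> \<in> B"
  then obtain u where "u \<in> Zp2 p" "\<psi> = Jstate p F u" using F by (auto simp: basisF_def)
  thus "max_ent p \<psi>" "stab_state p \<psi>" using max_ent_Jstate stab_state_Jstate F by auto
next
  fix B1 B2 assume "B1 \<in> basisF p ` K" "B2 \<in> basisF p ` K" "B1 \<noteq> B2"
  then obtain F1 F2 where F: "F1 \<in> K" "F2 \<in> K" "F1 \<noteq> F2" "B1 = basisF p F1" "B2 = basisF p F2" by blast
  thus "mub p B1 B2" using mub_basisF[of F1 F2] K by blast
qed

end

theorem theorem1:
  fixes p :: nat
  assumes "prime p"
  shows "(\<forall>F\<in>SL2 p. is_onb p (basisF p F))
    \<and> (\<forall>F1\<in>SL2 p. \<forall>F2\<in>SL2 p. m2tr p (m2mul p (m2inv p F1) F2) \<noteq> 2 mod p \<longrightarrow>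
          mub p (basisF p F1) (basisF p F2) \<and>
          (\<forall>u\<in>Zp2 p. \<forall>v\<in>Zp2 p. cmod (inner2 p (Jstate p F1 u) (Jstate p F2 v)) = 1 / real p))
    \<and> (\<forall>\<F>. \<F> \<subseteq> SL2 p \<and> card \<F> = p ^ 2 - 1 \<and>
          (\<forall>F1\<in>\<F>. \<forall>F2\<in>\<F>. F1 \<noteq> F2 \<longrightarrow> m2tr p (m2mul p (m2inv p F1) F2) \<noteq> 2 mod p) \<longrightarrow>
          ent_stab_mub p (p ^ 2 - 1) (basisF p ` \<F>) \<and>
          is_max_clique (SL2_group p) {F \<in> SL2 p. m2tr p F \<noteq> 2 mod p} \<F>)"
proof -
  interpret prime_modulus p
    using assms by unfold_locales (simp_all add: prime_gt_0_nat)
  have tr: "\<not> int p dvd (tr_adj_mul F1 F2 - 2)"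
    if "F1 \<in> SL2 p" "F2 \<in> SL2 p" "m2tr p (m2mul p (m2inv p F1) F2) \<noteq> 2 mod p" for F1 F2
    using not_dvd_tr_adj_mul_minus_2 that .
  show ?thesis
  proof (intro conjI ballI allI impI)
    show "is_onb p (basisF p F)" if "F \<in> SL2 p" for F
      using is_onb_basisF that .
  next
    fix F1 F2 assume F: "F1 \<in> SL2 p" "F2 \<in> SL2 p" "m2tr p (m2mul p (m2inv p F1) F2) \<noteq> 2 mod p"
    show "mub p (basisF p F1) (basisF p F2)" by (rule mub_basisF[OF F(1,2) tr[OF F]])
    show "cmod (inner2 p (Jstate p F1 u) (Jstate p F2 v)) = 1 / real p" if "u \<in> Zp2 p" "v \<in> Zp2 p" for u v
      by (rule cmod_inner2_Jstate[OF F(1,2) tr[OF F] that])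
  next
    fix \<F> assume H: "\<F> \<subseteq> SL2 p \<and> card \<F> = p ^ 2 - 1 \<and>
      (\<forall>F1\<in>\<F>. \<forall>F2\<in>\<F>. F1 \<noteq> F2 \<longrightarrow> m2tr p (m2mul p (m2inv p F1) F2) \<noteq> 2 mod p)"
    hence "\<forall>F1\<in>\<F>. \<forall>F2\<in>\<F>. F1 \<noteq> F2 \<longrightarrow> \<not> int p dvd (tr_adj_mul F1 F2 - 2)"
      using tr by blast
    thus "ent_stab_mub p (p ^ 2 - 1) (basisF p ` \<F>)"
      using ent_stab_mub_basisF[of \<F>] H by argo
    show "is_max_clique (SL2_group p) {F \<in> SL2 p. m2tr p F \<noteq> 2 mod p} \<F>"
      unfolding is_max_clique_def using is_clique_SL2_iff card_clique_le H by simp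
  qed
qed

end
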